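(* Let $(M,d)$ be a pointed metric space. The space $\mathrm{Lip}_0(M)$ has the LD2P if and only if for every optimal $\mu\in ba(\widetilde M)$ with $\|\mu\|=1$ and every $\gamma\in(0,1)$ there exist $A\subseteq\widetilde M$ with $\mu(A)\ge\gamma$, functions $f,g\in B_{\mathrm{Lip}_0(M)}$, and $u,v\in M$ with $u\ne v$ such that $f(m_{x,y})\ge\gamma$ and $g(m_{x,y})\ge\gamma$ for all $(x,y)\in A$, and for all $x,y\in\pi(A)$, \[\max\{f(x)-f(y),\,g(y)-g(x)\}+\gamma d(u,v)\le d(x,u)+d(y,v).\]
   Context: $M$ has base point $0$; $\mathrm{Lip}_0(M)$ is the real Banach space of Lipschitz $f\colon M\to\mathbb R$ with $f(0)=0$, normed by the best Lipschitz constant, with unit ball $B_{\mathrm{Lip}_0(M)}$. A Banach space $X$ has the LD2P (local diameter 2 property) if every slice $\{x\in B_X: x^*(x)>1-\alpha\}$ ($\|x^*\|=1$, $\alpha>0$) of its unit ball has diameter $2$. $\widetilde M=\{(x,y)\in M\times M:x\ne y\}$, $f(m_{x,y})=(f(x)-f(y))/d(x,y)$, and $\pi(A)=\{x\in M:\exists y,\ (x,y)\in A\text{ or }(y,x)\in A\}$. $ba(\widetilde M)$ is the Banach space of bounded finitely additive signed measures on the power set of $\widetilde M$ with norm $|\mu|(\widetilde M)$. $\Phi f(x,y)=(f(x)-f(y))/d(x,y)$ and $(\Phi^*\mu)(f)=\int_{\widetilde M}\Phi f\,d\mu$. $\mu$ is optimal if positive and $\|\Phi^*\mu\|=\|\mu\|$.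 *)

theory Defs
  imports "HOL-Analysis.Analysis"
begin

text \<open>Pointed metric space: the carrier is the type 'a (class metric_space), base point p.\<close>

definition Mtilde :: "('a \<times> 'a) set" where
  "Mtilde = {(x, y). x \<noteq> y}"

definition molec :: "('a::metric_space \<Rightarrow> real) \<Rightarrow> 'a \<Rightarrow> 'a \<Rightarrow> real" where
  "molec f x y = (f x - f y) / dist x y"

definition proj_pi :: "('a \<times> 'a) set \<Rightarrow> 'a set" where
  "proj_pi A = {x. \<exists>y. (x, y) \<in> A \<or> (y, x) \<in> A}"

definition Lip0 :: "'a::metric_space \<Rightarrow> ('a \<Rightarrow> real) set" where
  "Lip0 p = {f. f p = 0 \<and> (\<exists>C. \<forall>x y. \<bar>f x - f y\<bar> \<le> C * dist x y)}"

definition lipnorm :: "('a::metric_space \<Rightarrow> real) \<Rightarrow> real" where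
  "lipnorm f = Sup ({\<bar>f x - f y\<bar> / dist x y | x y. x \<noteq> y} \<union> {0})"

definition LipBall :: "'a::metric_space \<Rightarrow> ('a \<Rightarrow> real) set" where
  "LipBall p = {f \<in> Lip0 p. lipnorm f \<le> 1}"

definition lip_dual :: "'a::metric_space \<Rightarrow> (('a \<Rightarrow> real) \<Rightarrow> real) \<Rightarrow> bool" where
  "lip_dual p \<phi> \<longleftrightarrow>
     (\<forall>f \<in> Lip0 p. \<forall>g \<in> Lip0 p. \<phi> (\<lambda>x. f x + g x) = \<phi> f + \<phi> g) \<and>
     (\<forall>f \<in> Lip0 p. \<forall>c. \<phi> (\<lambda>x. c * f x) = c * \<phi> f) \<and>
     (\<exists>K. \<forall>f \<in> Lip0 p. \<bar>\<phi> f\<bar> \<le> K * lipnorm f)"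

definition dual_norm :: "'a::metric_space \<Rightarrow> (('a \<Rightarrow> real) \<Rightarrow> real) \<Rightarrow> real" where
  "dual_norm p \<phi> = Sup {\<bar>\<phi> f\<bar> | f. f \<in> LipBall p}"

definition slice :: "'a::metric_space \<Rightarrow> (('a \<Rightarrow> real) \<Rightarrow> real) \<Rightarrow> real \<Rightarrow> ('a \<Rightarrow> real) set" where
  "slice p \<phi> \<alpha> = {f \<in> LipBall p. \<phi> f > 1 - \<alpha>}"

definition LD2P :: "'a::metric_space \<Rightarrow> bool" where
  "LD2P p \<longleftrightarrow>
     (\<forall>\<phi> \<alpha>. lip_dual p \<phi> \<and> dual_norm p \<phi> = 1 \<and> \<alpha> > 0 \<longrightarrow>
        Sup {lipnorm (\<lambda>x. f x - g x) | f g. f \<in> slice p \<phi> \<alpha> \<and> g \<in> slice p \<phi> \<alpha>} = 2)"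

text \<open>ba(Mtilde): bounded finitely additive signed measures on the power set of Mtilde
  (only the values on subsets of Mtilde are relevant).\<close>

definition is_ba :: "(('a \<times> 'a) set \<Rightarrow> real) \<Rightarrow> bool" where
  "is_ba \<mu> \<longleftrightarrow>
     (\<forall>A B. A \<subseteq> Mtilde \<and> B \<subseteq> Mtilde \<and> A \<inter> B = {} \<longrightarrow> \<mu> (A \<union> B) = \<mu> A + \<mu> B) \<and>
     (\<exists>K. \<forall>A. A \<subseteq> Mtilde \<longrightarrow> \<bar>\<mu> A\<bar> \<le> K)"

definition fin_partition :: "('a \<times> 'a) set set \<Rightarrow> bool" where
  "fin_partition P \<longleftrightarrow> finite P \<and> \<Union>P = Mtilde \<and> {} \<notin> P \<and>
     (\<forall>A \<in> P. \<forall>B \<in> P. A \<noteq> B \<longrightarrow> A \<inter> B = {})"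

definition ba_norm :: "(('a \<times> 'a) set \<Rightarrow> real) \<Rightarrow> real" where
  "ba_norm \<mu> = Sup {(\<Sum>A\<in>P. \<bar>\<mu> A\<bar>) | P. fin_partition P}"

definition ba_positive :: "(('a \<times> 'a) set \<Rightarrow> real) \<Rightarrow> bool" where
  "ba_positive \<mu> \<longleftrightarrow> (\<forall>A. A \<subseteq> Mtilde \<longrightarrow> \<mu> A \<ge> 0)"

text \<open>Integral of a bounded function on Mtilde against a positive bounded finitely additive
  measure (supremum of lower sums over finite partitions; this is the standard integral
  for positive mu, which is the only case needed for optimality).\<close>

definition ba_integral :: "(('a \<times> 'a) set \<Rightarrow> real) \<Rightarrow> ('a \<times> 'a \<Rightarrow> real) \<Rightarrow> real" where
  "ba_integral \<mu> h = Sup {(\<Sum>A\<in>P. Inf (h ` A) * \<mu> A) | P. fin_partition P}"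

definition Phi :: "('a::metric_space \<Rightarrow> real) \<Rightarrow> 'a \<times> 'a \<Rightarrow> real" where
  "Phi f = (\<lambda>(x, y). (f x - f y) / dist x y)"

definition Phi_star_norm :: "'a::metric_space \<Rightarrow> (('a \<times> 'a) set \<Rightarrow> real) \<Rightarrow> real" where
  "Phi_star_norm p \<mu> = Sup {\<bar>ba_integral \<mu> (Phi f)\<bar> | f. f \<in> LipBall p}"

definition optimal :: "'a::metric_space \<Rightarrow> (('a \<times> 'a) set \<Rightarrow> real) \<Rightarrow> bool" where
  "optimal p \<mu> \<longleftrightarrow> ba_positive \<mu> \<and> Phi_star_norm p \<mu> = ba_norm \<mu>"

end

theory Submission
  imports Defs
begin

text \<open>
  A norm-one functional \<open>\<phi>\<close> on \<open>Lip\<^sub>0(M)\<close> is integration of molecules against an optimal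
  measure: Hahn--Banach extends \<open>\<phi> \<circ> \<Phi>\<inverse>\<close> to the bounded functions on \<open>Mtilde\<close>, dominated by
  the supremum, and such a functional is integration against a positive finitely additive
  probability \<open>\<mu>\<close>. Conversely every optimal \<open>\<mu>\<close> of norm one defines such a functional.

  If the slice \<open>{f. \<integral>\<Phi>f d\<mu> > 1 - \<alpha>}\<close> contains \<open>f, g\<close> with \<open>\<parallel>f - g\<parallel> > 1 + \<gamma>\<close>, a pair of points
  almost norming \<open>f - g\<close> provides \<open>u, v\<close>, and by Markov's inequality the molecules on which
  both \<open>f\<close> and \<open>g\<close> are at least \<open>\<gamma>\<close> carry mass at least \<open>\<gamma>\<close>. Conversely, given such data,
  clamping \<open>f\<close> and \<open>g\<close> between distance cones around \<open>u\<close> and \<open>v\<close> leaves them unchanged on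
  \<open>\<pi>(A)\<close>, hence in the slice, while pulling them apart by \<open>2\<gamma> d(u, v)\<close>.
\<close>

section \<open>Lipschitz functions and the molecule map\<close>

lemma Mtilde_iff [simp]: "(x, y) \<in> Mtilde \<longleftrightarrow> x \<noteq> y"
  unfolding Mtilde_def by simp

lemma bdd_above_Lip0_ratios:
  assumes "f \<in> Lip0 p"
  shows "bdd_above ({\<bar>f x - f y\<bar> / dist x y | x y. x \<noteq> y} \<union> {0})"
proof -
  obtain C where C: "\<And>x y. \<bar>f x - f y\<bar> \<le> C * dist x y"
    using assms unfolding Lip0_def by blast
  have "\<bar>f x - f y\<bar> / dist x y \<le> max C 0" if "x \<noteq> y" for x y
  proof -
    have "\<bar>f x - f y\<bar> \<le> max C 0 * dist x y"
      using C[of x y] mult_right_mono[of C "max C 0" "dist x y"] by simp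
    then show ?thesis using that by (simp add: divide_le_eq mult.commute)
  qed
  then show ?thesis by (intro bdd_aboveI[of _ "max C 0"]) auto
qed

lemma lipnorm_nonneg: "f \<in> Lip0 p \<Longrightarrow> 0 \<le> lipnorm f"
  unfolding lipnorm_def by (rule cSup_upper2[OF _ order_refl bdd_above_Lip0_ratios]) auto

lemma lipnorm_ge_ratio: "f \<in> Lip0 p \<Longrightarrow> x \<noteq> y \<Longrightarrow> \<bar>f x - f y\<bar> / dist x y \<le> lipnorm f"
  unfolding lipnorm_def by (rule cSup_upper[OF _ bdd_above_Lip0_ratios]) auto

lemma abs_diff_le_lipnorm: "f \<in> Lip0 p \<Longrightarrow> \<bar>f x - f y\<bar> \<le> lipnorm f * dist x y"
  using lipnorm_ge_ratio[of f p x y] by (cases "x = y") (auto simp: divide_le_eq)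

lemma lipnorm_le:
  assumes "\<And>x y. \<bar>f x - f y\<bar> \<le> L * dist x y" and "0 \<le> L"
  shows "lipnorm f \<le> L"
  unfolding lipnorm_def
  by (rule cSup_least) (use assms in \<open>auto simp: divide_le_eq mult.commute\<close>)

lemma lipnorm_gt_imp_ratio_gt:
  assumes "r < lipnorm f" and "0 \<le> r"
  obtains x y where "x \<noteq> y" and "r * dist x y < \<bar>f x - f y\<bar>"
proof -
  have "r < Sup ({\<bar>f x - f y\<bar> / dist x y | x y. x \<noteq> y} \<union> {0})"
    using assms(1) unfolding lipnorm_def .
  then obtain t where t: "t \<in> {\<bar>f x - f y\<bar> / dist x y | x y. x \<noteq> y} \<union> {0}" "r < t"
    using less_cSupD[of _ r] by blast
  then obtain x y where xy: "x \<noteq> y" "r < \<bar>f x - f y\<bar> / dist x y"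
    using assms(2) by auto
  then have "r * dist x y < \<bar>f x - f y\<bar>" by (simp add: less_divide_eq)
  with xy(1) show thesis by (rule that)
qed

lemma LipBall_iff: "f \<in> LipBall p \<longleftrightarrow> f p = 0 \<and> (\<forall>x y. \<bar>f x - f y\<bar> \<le> dist x y)"
proof
  assume f: "f \<in> LipBall p"
  then have "f \<in> Lip0 p" "lipnorm f \<le> 1" unfolding LipBall_def by auto
  then have "\<bar>f x - f y\<bar> \<le> dist x y" for x y
    using abs_diff_le_lipnorm[of f p x y] mult_right_mono[of "lipnorm f" 1 "dist x y"] by simp
  then show "f p = 0 \<and> (\<forall>x y. \<bar>f x - f y\<bar> \<le> dist x y)"
    using \<open>f \<in> Lip0 p\<close> unfolding Lip0_def by blast
next
  assume f: "f p = 0 \<and> (\<forall>x y. \<bar>f x - f y\<bar> \<le> dist x y)"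
  then have "f \<in> Lip0 p" unfolding Lip0_def by (auto intro!: exI[of _ 1])
  moreover have "lipnorm f \<le> 1" using f by (intro lipnorm_le) auto
  ultimately show "f \<in> LipBall p" unfolding LipBall_def by simp
qed

lemma LipBall_Lip0: "f \<in> LipBall p \<Longrightarrow> f \<in> Lip0 p"
  unfolding LipBall_def by blast

lemma LipBall_abs_diff_le: "f \<in> LipBall p \<Longrightarrow> \<bar>f x - f y\<bar> \<le> dist x y"
  unfolding LipBall_iff by blast

lemma zero_in_LipBall: "(\<lambda>x. 0) \<in> LipBall p"
  unfolding LipBall_iff by simp

lemma uminus_in_LipBall: "f \<in> LipBall p \<Longrightarrow> (\<lambda>x. -1 * f x) \<in> LipBall p"
  unfolding LipBall_iff by (simp add: abs_minus_commute)

lemma Lip0_add: "f \<in> Lip0 p \<Longrightarrow> g \<in> Lip0 p \<Longrightarrow> (\<lambda>x. f x + g x) \<in> Lip0 p"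
proof -
  assume f: "f \<in> Lip0 p" and g: "g \<in> Lip0 p"
  obtain C1 C2 where "\<And>x y. \<bar>f x - f y\<bar> \<le> C1 * dist x y" "\<And>x y. \<bar>g x - g y\<bar> \<le> C2 * dist x y"
    using f g unfolding Lip0_def by blast
  then have "\<bar>(f x + g x) - (f y + g y)\<bar> \<le> (C1 + C2) * dist x y" for x y
    using abs_triangle_ineq[of "f x - f y" "g x - g y"] add_mono[of "\<bar>f x - f y\<bar>" _ "\<bar>g x - g y\<bar>"]
    by (fastforce simp: distrib_right)
  then show ?thesis using f g unfolding Lip0_def by auto
qed

lemma Lip0_scale: "f \<in> Lip0 p \<Longrightarrow> (\<lambda>x. c * f x) \<in> Lip0 p"
proof -
  assume f: "f \<in> Lip0 p"
  obtain C where "\<And>x y. \<bar>f x - f y\<bar> \<le> C * dist x y" using f unfolding Lip0_def by blast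
  then have "\<bar>c * f x - c * f y\<bar> \<le> (\<bar>c\<bar> * C) * dist x y" for x y
    using mult_left_mono[of "\<bar>f x - f y\<bar>" "C * dist x y" "\<bar>c\<bar>"]
    by (simp add: abs_mult[symmetric] right_diff_distrib mult.assoc)
  then show ?thesis using f unfolding Lip0_def by auto
qed

lemma Lip0_diff: "f \<in> Lip0 p \<Longrightarrow> g \<in> Lip0 p \<Longrightarrow> (\<lambda>x. f x - g x) \<in> Lip0 p"
  using Lip0_add[of f p "\<lambda>x. -1 * g x"] Lip0_scale[of g p "-1"] by simp

lemma lipnorm_diff_LipBall_le:
  assumes "f \<in> LipBall p" and "g \<in> LipBall p"
  shows "lipnorm (\<lambda>x. f x - g x) \<le> 2"
proof (rule lipnorm_le)
  fix x y
  show "\<bar>(f x - g x) - (f y - g y)\<bar> \<le> 2 * dist x y"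
    using LipBall_abs_diff_le[OF assms(1), of x y] LipBall_abs_diff_le[OF assms(2), of x y]
    unfolding abs_le_iff by linarith
qed simp

lemma Phi_Pair: "Phi f (x, y) = molec f x y"
  by (simp add: Phi_def molec_def)

lemma Phi_add: "Phi (\<lambda>x. f x + g x) = (\<lambda>z. Phi f z + Phi g z)"
  by (auto simp: Phi_def add_divide_distrib[symmetric] split: prod.split)

lemma Phi_scale: "Phi (\<lambda>x. c * f x) = (\<lambda>z. c * Phi f z)"
  by (auto simp: Phi_def right_diff_distrib split: prod.split)

lemma abs_Phi_le_lipnorm:
  assumes "f \<in> Lip0 p" shows "\<bar>Phi f z\<bar> \<le> lipnorm f"
proof (cases z)
  case (Pair x y)
  then show ?thesis
    using lipnorm_ge_ratio[OF assms, of x y] lipnorm_nonneg[OF assms]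
    by (cases "x = y") (auto simp: Phi_def abs_divide)
qed

lemma inj_on_Phi_Lip0: "inj_on Phi (Lip0 p)"
proof (rule inj_onI)
  fix f g assume f: "f \<in> Lip0 p" and g: "g \<in> Lip0 p" and eq: "Phi f = Phi g"
  show "f = g"
  proof
    fix x
    have "Phi f (x, p) = Phi g (x, p)" using eq by simp
    then show "f x = g x" using f g by (cases "x = p") (auto simp: Phi_def Lip0_def)
  qed
qed

lemma lipnorm_le_Sup_Phi:
  fixes f :: "'a::metric_space \<Rightarrow> real" and x0 y0 :: 'a
  assumes f: "f \<in> Lip0 p" and "x0 \<noteq> y0"
  shows "lipnorm f \<le> Sup (Phi f ` Mtilde)"
proof -
  have bdd: "bdd_above (Phi f ` Mtilde)"
    using abs_Phi_le_lipnorm[OF f] by (intro bdd_aboveI[of _ "lipnorm f"]) (force simp: abs_le_iff)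
  have Phi_le: "Phi f (x, y) \<le> Sup (Phi f ` Mtilde)" if "x \<noteq> y" for x y
    by (rule cSup_upper[OF _ bdd]) (use that in \<open>auto simp: Mtilde_def\<close>)
  have "Phi f (x0, y0) + Phi f (y0, x0) = 0"
    by (simp add: Phi_def dist_commute divide_simps)
  then have "0 \<le> Sup (Phi f ` Mtilde)"
    using Phi_le[OF \<open>x0 \<noteq> y0\<close>] Phi_le[of y0 x0] \<open>x0 \<noteq> y0\<close> by fastforce
  moreover have "\<bar>f x - f y\<bar> / dist x y \<le> Sup (Phi f ` Mtilde)" if "x \<noteq> y" for x y
    using Phi_le[OF that] Phi_le[of y x] that
    by (cases "0 \<le> f x - f y") (auto simp: Phi_def dist_commute)
  ultimately show ?thesis
    unfolding lipnorm_def by (intro cSup_least) auto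
qed

lemma abs_le_dual_norm:
  assumes "lip_dual p \<phi>" and "f \<in> LipBall p"
  shows "\<bar>\<phi> f\<bar> \<le> dual_norm p \<phi>"
proof -
  obtain K where K: "\<forall>f\<in>Lip0 p. \<bar>\<phi> f\<bar> \<le> K * lipnorm f"
    using assms(1) unfolding lip_dual_def by blast
  have "\<bar>\<phi> g\<bar> \<le> max K 0" if "g \<in> LipBall p" for g
  proof -
    have "0 \<le> lipnorm g" "lipnorm g \<le> 1" "\<bar>\<phi> g\<bar> \<le> K * lipnorm g"
      using that K lipnorm_nonneg[of g p] unfolding LipBall_def by auto
    moreover have "K * lipnorm g \<le> max K 0"
      using \<open>0 \<le> lipnorm g\<close> \<open>lipnorm g \<le> 1\<close>
      by (cases "0 \<le> K") (auto simp: mult_left_le mult_nonpos_nonneg)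
    ultimately show ?thesis by linarith
  qed
  then have "bdd_above {\<bar>\<phi> g\<bar> | g. g \<in> LipBall p}" by (intro bdd_aboveI) blast
  then show ?thesis
    unfolding dual_norm_def by (rule cSup_upper[rotated]) (use assms(2) in blast)
qed

lemma abs_le_lipnorm_if_dual_norm_1:
  assumes \<phi>: "lip_dual p \<phi>" "dual_norm p \<phi> = 1" and f: "f \<in> Lip0 p"
  shows "\<bar>\<phi> f\<bar> \<le> lipnorm f"
proof (rule dense_ge)
  fix L assume L: "lipnorm f < L"
  then have L0: "0 < L" using lipnorm_nonneg[OF f] by linarith
  have "(\<lambda>x. (1 / L) * f x) \<in> LipBall p"
    unfolding LipBall_iff
  proof (intro conjI allI)
    show "(1 / L) * f p = 0" using f unfolding Lip0_def by simp
    fix x y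
    have "\<bar>f x - f y\<bar> \<le> L * dist x y"
      using abs_diff_le_lipnorm[OF f, of x y] L mult_right_mono[of "lipnorm f" L "dist x y"] by simp
    moreover have "(1 / L) * f x - (1 / L) * f y = (f x - f y) / L"
      by (simp add: diff_divide_distrib)
    ultimately show "\<bar>(1 / L) * f x - (1 / L) * f y\<bar> \<le> dist x y"
      using L0 by (simp add: abs_divide divide_le_eq mult.commute)
  qed
  then have "\<bar>\<phi> (\<lambda>x. (1 / L) * f x)\<bar> \<le> 1"
    using abs_le_dual_norm[OF \<phi>(1)] \<phi>(2) by metis
  moreover have "\<phi> (\<lambda>x. (1 / L) * f x) = (1 / L) * \<phi> f"
    using \<phi>(1) f unfolding lip_dual_def by blast
  ultimately show "\<bar>\<phi> f\<bar> \<le> L" using L0 by (simp add: abs_mult divide_le_eq)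
qed

lemma slice_nonempty:
  assumes \<phi>: "lip_dual p \<phi>" "dual_norm p \<phi> = 1" and "0 < \<alpha>"
  obtains f where "f \<in> slice p \<phi> \<alpha>"
proof -
  have "1 - \<alpha> < Sup {\<bar>\<phi> f\<bar> | f. f \<in> LipBall p}"
    using \<phi>(2) \<open>0 < \<alpha>\<close> unfolding dual_norm_def by simp
  then obtain f where f: "f \<in> LipBall p" "1 - \<alpha> < \<bar>\<phi> f\<bar>"
    using less_cSupD[of "{\<bar>\<phi> f\<bar> | f. f \<in> LipBall p}"] zero_in_LipBall by blast
  have "\<phi> (\<lambda>x. -1 * f x) = -1 * \<phi> f"
    using \<phi>(1) LipBall_Lip0[OF f(1)] unfolding lip_dual_def by blast
  show thesis
  proof (cases "0 \<le> \<phi> f")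
    case True
    then have "f \<in> slice p \<phi> \<alpha>" using f unfolding slice_def by auto
    then show thesis by (rule that)
  next
    case False
    then have "(\<lambda>x. -1 * f x) \<in> slice p \<phi> \<alpha>"
      using f uminus_in_LipBall[OF f(1)] \<open>\<phi> (\<lambda>x. -1 * f x) = -1 * \<phi> f\<close>
      unfolding slice_def by auto
    then show thesis by (rule that)
  qed
qed

lemma exists_two_points_if_dual_norm_1:
  fixes \<phi> :: "('a::metric_space \<Rightarrow> real) \<Rightarrow> real"
  assumes \<phi>: "lip_dual p \<phi>" "dual_norm p \<phi> = 1"
  obtains x y :: 'a where "x \<noteq> y"
proof (rule ccontr)
  assume "\<not> thesis"
  then have single: "x = y" for x y :: 'a using that by blast
  have ball_zero: "f = (\<lambda>x. 0)" if f: "f \<in> LipBall p" for f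
  proof
    fix x show "f x = 0" using f single[of x p] unfolding LipBall_iff by simp
  qed
  have hom: "\<And>f c. f \<in> Lip0 p \<Longrightarrow> \<phi> (\<lambda>x. c * f x) = c * \<phi> f"
    using \<phi>(1) unfolding lip_dual_def by blast
  have "\<phi> (\<lambda>x. 0 * 0) = 0 * \<phi> (\<lambda>x. 0)" by (rule hom, rule LipBall_Lip0[OF zero_in_LipBall])
  then have "{\<bar>\<phi> f\<bar> | f. f \<in> LipBall p} = {0}"
    using ball_zero zero_in_LipBall by (intro set_eqI iffI) force+
  then show False using \<phi>(2) unfolding dual_norm_def by simp
qed

section \<open>Positive finitely additive measures and their integral\<close>

definition positive_ba :: "(('a \<times> 'a) set \<Rightarrow> real) \<Rightarrow> bool" where
  "positive_ba \<mu> \<longleftrightarrow> is_ba \<mu> \<and> ba_positive \<mu>"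

definition bdd_on_Mtilde :: "('a \<times> 'a \<Rightarrow> real) \<Rightarrow> bool" where
  "bdd_on_Mtilde h \<longleftrightarrow> (\<exists>c. \<forall>z\<in>Mtilde. \<bar>h z\<bar> \<le> c)"

definition lower_sum :: "(('a \<times> 'a) set \<Rightarrow> real) \<Rightarrow> ('a \<times> 'a \<Rightarrow> real) \<Rightarrow> ('a \<times> 'a) set set \<Rightarrow> real" where
  "lower_sum \<mu> h P = (\<Sum>C\<in>P. Inf (h ` C) * \<mu> C)"

definition upper_sum :: "(('a \<times> 'a) set \<Rightarrow> real) \<Rightarrow> ('a \<times> 'a \<Rightarrow> real) \<Rightarrow> ('a \<times> 'a) set set \<Rightarrow> real" where
  "upper_sum \<mu> h P = (\<Sum>C\<in>P. Sup (h ` C) * \<mu> C)"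

lemma positive_ba_union:
  "positive_ba \<mu> \<Longrightarrow> A \<subseteq> Mtilde \<Longrightarrow> B \<subseteq> Mtilde \<Longrightarrow> A \<inter> B = {} \<Longrightarrow> \<mu> (A \<union> B) = \<mu> A + \<mu> B"
  unfolding positive_ba_def is_ba_def by blast

lemma positive_ba_nonneg: "positive_ba \<mu> \<Longrightarrow> A \<subseteq> Mtilde \<Longrightarrow> 0 \<le> \<mu> A"
  unfolding positive_ba_def ba_positive_def by blast

lemma positive_ba_empty: "positive_ba \<mu> \<Longrightarrow> \<mu> {} = 0"
  using positive_ba_union[of \<mu> "{}" "{}"] by simp

lemma positive_ba_diff:
  assumes "positive_ba \<mu>" "A \<subseteq> B" "B \<subseteq> Mtilde"
  shows "\<mu> (B - A) = \<mu> B - \<mu> A"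
proof -
  have "\<mu> (A \<union> (B - A)) = \<mu> A + \<mu> (B - A)"
    using assms by (intro positive_ba_union) auto
  moreover have "A \<union> (B - A) = B" using assms(2) by blast
  ultimately show ?thesis by simp
qed

lemma positive_ba_mono: "positive_ba \<mu> \<Longrightarrow> A \<subseteq> B \<Longrightarrow> B \<subseteq> Mtilde \<Longrightarrow> \<mu> A \<le> \<mu> B"
  using positive_ba_diff[of \<mu> A B] positive_ba_nonneg[of \<mu> "B - A"] by auto

lemma positive_ba_union_le:
  assumes "positive_ba \<mu>" "A \<subseteq> Mtilde" "B \<subseteq> Mtilde"
  shows "\<mu> (A \<union> B) \<le> \<mu> A + \<mu> B"
proof -
  have "\<mu> (A \<union> (B - A)) = \<mu> A + \<mu> (B - A)"
    using assms by (intro positive_ba_union) auto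
  moreover have "A \<union> (B - A) = A \<union> B" by blast
  ultimately show ?thesis using positive_ba_mono[OF assms(1), of "B - A" B] assms(3) by auto
qed

lemma fin_partitionD:
  assumes "fin_partition P"
  shows "finite P" and "\<Union>P = Mtilde" and "\<And>C. C \<in> P \<Longrightarrow> C \<noteq> {}"
    and "\<And>C. C \<in> P \<Longrightarrow> C \<subseteq> Mtilde" and "\<And>C D. C \<in> P \<Longrightarrow> D \<in> P \<Longrightarrow> C \<noteq> D \<Longrightarrow> C \<inter> D = {}"
  using assms unfolding fin_partition_def by blast+

lemma positive_ba_sum_disjoint:
  assumes "positive_ba \<mu>" "finite P" "\<And>C. C \<in> P \<Longrightarrow> C \<subseteq> Mtilde"
    "\<And>C D. C \<in> P \<Longrightarrow> D \<in> P \<Longrightarrow> C \<noteq> D \<Longrightarrow> C \<inter> D = {}"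
  shows "(\<Sum>C\<in>P. \<mu> (C \<inter> E)) = \<mu> (\<Union>P \<inter> E)"
  using assms(2-4)
proof (induction P rule: finite_induct)
  case empty
  then show ?case using positive_ba_empty[OF assms(1)] by simp
next
  case (insert C P)
  have "(C \<inter> E) \<inter> (\<Union>P \<inter> E) = {}" using insert.prems(2) insert.hyps(2) by blast
  then have "\<mu> ((C \<inter> E) \<union> (\<Union>P \<inter> E)) = \<mu> (C \<inter> E) + \<mu> (\<Union>P \<inter> E)"
    using insert.prems(1) by (intro positive_ba_union[OF assms(1)]) auto
  moreover have "\<Union>(insert C P) \<inter> E = (C \<inter> E) \<union> (\<Union>P \<inter> E)" by blast
  ultimately show ?case using insert by simp
qed

lemma positive_ba_partition_sum:
  assumes "positive_ba \<mu>" "fin_partition P" "E \<subseteq> Mtilde"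
  shows "(\<Sum>C\<in>P. \<mu> (C \<inter> E)) = \<mu> E"
  using positive_ba_sum_disjoint[OF assms(1) fin_partitionD(1,4,5)[OF assms(2)], of E]
    fin_partitionD(2)[OF assms(2)] assms(3)
  by (simp add: Int_absorb1)

lemma positive_ba_partition_total:
  assumes "positive_ba \<mu>" "fin_partition P"
  shows "(\<Sum>C\<in>P. \<mu> C) = \<mu> Mtilde"
  using positive_ba_partition_sum[OF assms order_refl] fin_partitionD(4)[OF assms(2)]
  by (simp add: Int_absorb2)

lemma fin_partition_trivial: "fin_partition ({Mtilde} - {{}})"
  unfolding fin_partition_def by auto

lemma ba_norm_positive_ba:
  assumes "positive_ba \<mu>"
  shows "ba_norm \<mu> = \<mu> Mtilde"
proof -
  have "(\<Sum>C\<in>P. \<bar>\<mu> C\<bar>) = \<mu> Mtilde" if "fin_partition P" for P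
    using positive_ba_partition_total[OF assms that] positive_ba_nonneg[OF assms]
      fin_partitionD(4)[OF that] by simp
  then have "{(\<Sum>C\<in>P. \<bar>\<mu> C\<bar>) | P. fin_partition P} = {\<mu> Mtilde}"
    using fin_partition_trivial by (auto intro!: exI[of _ "{Mtilde} - {{}}"])
  then show ?thesis unfolding ba_norm_def by simp
qed

definition level_partition :: "('a \<times> 'a \<Rightarrow> 'k) \<Rightarrow> ('a \<times> 'a) set set" where
  "level_partition k = (\<lambda>z. {w \<in> Mtilde. k w = k z}) ` Mtilde"

lemma fin_partition_level_partition:
  assumes "finite (k ` Mtilde)"
  shows "fin_partition (level_partition k)"
proof -
  have "level_partition k = (\<lambda>v. {w \<in> Mtilde. k w = v}) ` (k ` Mtilde)"
    unfolding level_partition_def by (simp add: image_image)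
  then have "finite (level_partition k)" using assms by simp
  then show ?thesis unfolding fin_partition_def level_partition_def by auto
qed

lemma level_partition_eq: "C \<in> level_partition k \<Longrightarrow> w \<in> C \<Longrightarrow> w' \<in> C \<Longrightarrow> k w = k w'"
  unfolding level_partition_def by auto

lemma bdd_on_Mtilde_image:
  assumes "bdd_on_Mtilde h" "C \<subseteq> Mtilde"
  shows "bdd_below (h ` C)" and "bdd_above (h ` C)"
proof -
  obtain c where "\<forall>z\<in>Mtilde. \<bar>h z\<bar> \<le> c" using assms(1) unfolding bdd_on_Mtilde_def by blast
  then have "\<forall>z\<in>C. - c \<le> h z \<and> h z \<le> c" using assms(2) by (force simp: abs_le_iff)
  then show "bdd_below (h ` C)" "bdd_above (h ` C)"
    by (auto intro: bdd_belowI2 bdd_aboveI2)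
qed

lemma Inf_image_le: "bdd_on_Mtilde h \<Longrightarrow> C \<subseteq> Mtilde \<Longrightarrow> z \<in> C \<Longrightarrow> Inf (h ` C) \<le> h z"
  by (rule cINF_lower[OF bdd_on_Mtilde_image(1)])

lemma Sup_image_ge: "bdd_on_Mtilde h \<Longrightarrow> C \<subseteq> Mtilde \<Longrightarrow> z \<in> C \<Longrightarrow> h z \<le> Sup (h ` C)"
  by (rule cSUP_upper[OF _ bdd_on_Mtilde_image(2)])

lemma bdd_on_Mtilde_add: "bdd_on_Mtilde h \<Longrightarrow> bdd_on_Mtilde k \<Longrightarrow> bdd_on_Mtilde (\<lambda>z. h z + k z)"
  unfolding bdd_on_Mtilde_def by (metis abs_triangle_ineq add_mono order_trans)

lemma bdd_on_Mtilde_scale: "bdd_on_Mtilde h \<Longrightarrow> bdd_on_Mtilde (\<lambda>z. c * h z)"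
  unfolding bdd_on_Mtilde_def by (metis abs_ge_zero abs_mult mult_left_mono)

lemma bdd_on_Mtilde_Phi: "f \<in> Lip0 p \<Longrightarrow> bdd_on_Mtilde (Phi f)"
  unfolding bdd_on_Mtilde_def using abs_Phi_le_lipnorm by blast

lemma lower_sum_ge:
  assumes "positive_ba \<mu>" "fin_partition P" "\<And>C z. C \<in> P \<Longrightarrow> z \<in> C \<Longrightarrow> a C \<le> h z"
  shows "(\<Sum>C\<in>P. a C * \<mu> C) \<le> lower_sum \<mu> h P"
  unfolding lower_sum_def
proof (rule sum_mono)
  fix C assume C: "C \<in> P"
  have "a C \<le> Inf (h ` C)"
    by (rule cINF_greatest) (use assms(3) C fin_partitionD(3)[OF assms(2) C] in auto)
  then show "a C * \<mu> C \<le> Inf (h ` C) * \<mu> C"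
    by (rule mult_right_mono) (use positive_ba_nonneg[OF assms(1)] fin_partitionD(4)[OF assms(2) C] in auto)
qed

lemma upper_sum_le:
  assumes "positive_ba \<mu>" "fin_partition P" "\<And>C z. C \<in> P \<Longrightarrow> z \<in> C \<Longrightarrow> h z \<le> b C"
  shows "upper_sum \<mu> h P \<le> (\<Sum>C\<in>P. b C * \<mu> C)"
  unfolding upper_sum_def
proof (rule sum_mono)
  fix C assume C: "C \<in> P"
  have "Sup (h ` C) \<le> b C"
    by (rule cSUP_least) (use assms(3) C fin_partitionD(3)[OF assms(2) C] in auto)
  then show "Sup (h ` C) * \<mu> C \<le> b C * \<mu> C"
    by (rule mult_right_mono) (use positive_ba_nonneg[OF assms(1)] fin_partitionD(4)[OF assms(2) C] in auto)
qed

text \<open>Both sums are compared on the common refinement \<open>{C \<inter> D}\<close>.\<close>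

lemma lower_sum_le_upper_sum:
  assumes \<mu>: "positive_ba \<mu>" and P: "fin_partition P" and Q: "fin_partition Q" and h: "bdd_on_Mtilde h"
  shows "lower_sum \<mu> h P \<le> upper_sum \<mu> h Q"
proof -
  have "lower_sum \<mu> h P = (\<Sum>C\<in>P. \<Sum>D\<in>Q. Inf (h ` C) * \<mu> (D \<inter> C))"
    unfolding lower_sum_def
    using positive_ba_partition_sum[OF \<mu> Q] fin_partitionD(4)[OF P]
    by (intro sum.cong refl) (simp add: sum_distrib_left[symmetric])
  also have "\<dots> \<le> (\<Sum>C\<in>P. \<Sum>D\<in>Q. Sup (h ` D) * \<mu> (D \<inter> C))"
  proof (intro sum_mono)
    fix C D assume C: "C \<in> P" and D: "D \<in> Q"
    show "Inf (h ` C) * \<mu> (D \<inter> C) \<le> Sup (h ` D) * \<mu> (D \<inter> C)"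
    proof (cases "D \<inter> C = {}")
      case False
      then obtain z where "z \<in> D" "z \<in> C" by blast
      then have "Inf (h ` C) \<le> Sup (h ` D)"
        using Inf_image_le[OF h fin_partitionD(4)[OF P C]] Sup_image_ge[OF h fin_partitionD(4)[OF Q D]]
        by (meson order_trans)
      then show ?thesis
        using positive_ba_nonneg[OF \<mu>, of "D \<inter> C"] fin_partitionD(4)[OF Q D]
        by (intro mult_right_mono) auto
    qed (simp add: positive_ba_empty[OF \<mu>])
  qed
  also have "\<dots> = (\<Sum>D\<in>Q. Sup (h ` D) * (\<Sum>C\<in>P. \<mu> (C \<inter> D)))"
    by (subst sum.swap) (simp add: sum_distrib_left Int_commute)
  also have "\<dots> = upper_sum \<mu> h Q"
    unfolding upper_sum_def
    using positive_ba_partition_sum[OF \<mu> P] fin_partitionD(4)[OF Q] by (intro sum.cong refl) simp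
  finally show ?thesis .
qed

lemma lower_sum_le_ba_integral:
  assumes "positive_ba \<mu>" "fin_partition P" "bdd_on_Mtilde h"
  shows "lower_sum \<mu> h P \<le> ba_integral \<mu> h"
  unfolding ba_integral_def lower_sum_def[symmetric]
proof (rule cSup_upper)
  show "lower_sum \<mu> h P \<in> {lower_sum \<mu> h P |P. fin_partition P}" using assms(2) by blast
  show "bdd_above {lower_sum \<mu> h P |P. fin_partition P}"
    using lower_sum_le_upper_sum[OF assms(1) _ fin_partition_trivial assms(3)] by (intro bdd_aboveI) blast
qed

lemma ba_integral_le_upper_sum:
  assumes "positive_ba \<mu>" "fin_partition Q" "bdd_on_Mtilde h"
  shows "ba_integral \<mu> h \<le> upper_sum \<mu> h Q"
  unfolding ba_integral_def lower_sum_def[symmetric]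
  by (rule cSup_least) (use fin_partition_trivial lower_sum_le_upper_sum[OF assms(1) _ assms(2,3)] in auto)

lemma finite_floor_image:
  assumes "bdd_on_Mtilde h"
  shows "finite ((\<lambda>z. \<lfloor>h z\<rfloor>) ` Mtilde)"
proof -
  obtain c where c: "\<forall>z\<in>Mtilde. \<bar>h z\<bar> \<le> c" using assms unfolding bdd_on_Mtilde_def by blast
  then have "\<lfloor>h z\<rfloor> \<in> {\<lfloor>-c\<rfloor>..\<lfloor>c\<rfloor>}" if "z \<in> Mtilde" for z
    using c[rule_format, OF that] by (simp add: abs_le_iff floor_mono)
  then have "(\<lambda>z. \<lfloor>h z\<rfloor>) ` Mtilde \<subseteq> {\<lfloor>-c\<rfloor>..\<lfloor>c\<rfloor>}" by blast
  then show ?thesis by (rule finite_subset) simp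
qed

lemma upper_sum_minus_lower_sum_le:
  assumes \<mu>: "positive_ba \<mu>" and Q: "fin_partition Q" and h: "bdd_on_Mtilde h"
    and osc: "\<And>C z w. C \<in> Q \<Longrightarrow> z \<in> C \<Longrightarrow> w \<in> C \<Longrightarrow> h z \<le> h w + e"
  shows "upper_sum \<mu> h Q - lower_sum \<mu> h Q \<le> e * \<mu> Mtilde"
proof -
  have "Sup (h ` C) - Inf (h ` C) \<le> e" if C: "C \<in> Q" for C
  proof -
    have "h z - e \<le> Inf (h ` C)" if "z \<in> C" for z
    proof (rule cINF_greatest[OF fin_partitionD(3)[OF Q C]])
      fix w assume "w \<in> C"
      then show "h z - e \<le> h w" using osc[OF C \<open>z \<in> C\<close> \<open>w \<in> C\<close>] by simp
    qed
    then have "Sup (h ` C) \<le> Inf (h ` C) + e"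
      by (intro cSUP_least[OF fin_partitionD(3)[OF Q C]]) (simp add: algebra_simps)
    then show ?thesis by simp
  qed
  then have "upper_sum \<mu> h Q - lower_sum \<mu> h Q \<le> (\<Sum>C\<in>Q. e * \<mu> C)"
    unfolding upper_sum_def lower_sum_def sum_subtractf[symmetric] left_diff_distrib[symmetric]
    using positive_ba_nonneg[OF \<mu>] fin_partitionD(4)[OF Q] by (intro sum_mono mult_right_mono) auto
  also have "\<dots> = e * \<mu> Mtilde"
    using positive_ba_partition_total[OF \<mu> Q] by (simp add: sum_distrib_left[symmetric])
  finally show ?thesis .
qed

text \<open>For large \<open>n\<close> the joint level sets of \<open>\<lfloor>n h\<^sub>1\<rfloor>\<close> and \<open>\<lfloor>n h\<^sub>2\<rfloor>\<close> will do.\<close>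

lemma exists_fine_partition:
  assumes \<mu>: "positive_ba \<mu>" and h: "bdd_on_Mtilde h\<^sub>1" "bdd_on_Mtilde h\<^sub>2" and "0 < \<epsilon>"
  obtains Q where "fin_partition Q"
    and "upper_sum \<mu> h\<^sub>1 Q - lower_sum \<mu> h\<^sub>1 Q \<le> \<epsilon>" "upper_sum \<mu> h\<^sub>2 Q - lower_sum \<mu> h\<^sub>2 Q \<le> \<epsilon>"
proof -
  obtain n :: nat where n: "\<mu> Mtilde / \<epsilon> < real n" using reals_Archimedean2 by blast
  have "0 \<le> \<mu> Mtilde / \<epsilon>" using positive_ba_nonneg[OF \<mu>, of Mtilde] \<open>0 < \<epsilon>\<close> by simp
  then have n0: "0 < real n" using n by linarith
  define k where "k z = (\<lfloor>real n * h\<^sub>1 z\<rfloor>, \<lfloor>real n * h\<^sub>2 z\<rfloor>)" for z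
  define Q where "Q = level_partition k"
  have "k ` Mtilde \<subseteq> (\<lambda>z. \<lfloor>real n * h\<^sub>1 z\<rfloor>) ` Mtilde \<times> (\<lambda>z. \<lfloor>real n * h\<^sub>2 z\<rfloor>) ` Mtilde"
    unfolding k_def by auto
  moreover have "finite ((\<lambda>z. \<lfloor>real n * h\<^sub>1 z\<rfloor>) ` Mtilde \<times> (\<lambda>z. \<lfloor>real n * h\<^sub>2 z\<rfloor>) ` Mtilde)"
    by (intro finite_cartesian_product finite_floor_image bdd_on_Mtilde_scale h)
  ultimately have Q: "fin_partition Q"
    unfolding Q_def by (intro fin_partition_level_partition) (rule finite_subset)
  have gap: "upper_sum \<mu> h Q - lower_sum \<mu> h Q \<le> \<epsilon>"
    if h: "bdd_on_Mtilde h" and k_eq: "\<And>z w. k z = k w \<Longrightarrow> \<lfloor>real n * h z\<rfloor> = \<lfloor>real n * h w\<rfloor>" for h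
  proof -
    have "upper_sum \<mu> h Q - lower_sum \<mu> h Q \<le> 1 / real n * \<mu> Mtilde"
    proof (rule upper_sum_minus_lower_sum_le[OF \<mu> Q h])
      fix C z w assume "C \<in> Q" "z \<in> C" "w \<in> C"
      then have "\<lfloor>real n * h z\<rfloor> = \<lfloor>real n * h w\<rfloor>"
        using k_eq level_partition_eq unfolding Q_def by blast
      then have "real n * h z < real n * h w + 1" by linarith
      then show "h z \<le> h w + 1 / real n" using n0 by (simp add: field_simps)
    qed
    also have "\<dots> \<le> \<epsilon>" using n n0 \<open>0 < \<epsilon>\<close> by (simp add: field_simps)
    finally show ?thesis .
  qed
  have "upper_sum \<mu> h\<^sub>1 Q - lower_sum \<mu> h\<^sub>1 Q \<le> \<epsilon>" "upper_sum \<mu> h\<^sub>2 Q - lower_sum \<mu> h\<^sub>2 Q \<le> \<epsilon>"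
    by (intro gap h; simp add: k_def)+
  with Q show thesis by (rule that)
qed

lemma eq_if_abs_diff_le_eps:
  fixes x y K :: real
  assumes "\<And>e. 0 < e \<Longrightarrow> \<bar>x - y\<bar> \<le> K * e"
  shows "x = y"
proof -
  have "\<bar>x - y\<bar> \<le> e" if "0 < e" for e
  proof -
    have "0 < e / (\<bar>K\<bar> + 1)" using that by simp
    then have "\<bar>x - y\<bar> \<le> K * (e / (\<bar>K\<bar> + 1))" by (rule assms)
    also have "\<dots> \<le> e"
    proof -
      have "K * e \<le> (\<bar>K\<bar> + 1) * e" using that by (intro mult_right_mono) auto
      then show ?thesis by (simp add: field_simps add_pos_nonneg)
    qed
    finally show ?thesis .
  qed
  then show ?thesis using dense_eq0_I[of "x - y"] by simp
qed

lemma ba_integral_add: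
  assumes \<mu>: "positive_ba \<mu>" and h: "bdd_on_Mtilde h\<^sub>1" "bdd_on_Mtilde h\<^sub>2"
  shows "ba_integral \<mu> (\<lambda>z. h\<^sub>1 z + h\<^sub>2 z) = ba_integral \<mu> h\<^sub>1 + ba_integral \<mu> h\<^sub>2"
proof (rule eq_if_abs_diff_le_eps)
  fix e :: real assume "0 < e"
  then obtain Q where Q: "fin_partition Q"
    "upper_sum \<mu> h\<^sub>1 Q - lower_sum \<mu> h\<^sub>1 Q \<le> e" "upper_sum \<mu> h\<^sub>2 Q - lower_sum \<mu> h\<^sub>2 Q \<le> e"
    using exists_fine_partition[OF assms] by blast
  have "(\<Sum>C\<in>Q. (Inf (h\<^sub>1 ` C) + Inf (h\<^sub>2 ` C)) * \<mu> C) \<le> lower_sum \<mu> (\<lambda>z. h\<^sub>1 z + h\<^sub>2 z) Q"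
    using Inf_image_le[OF h(1)] Inf_image_le[OF h(2)] fin_partitionD(4)[OF Q(1)]
    by (intro lower_sum_ge[OF \<mu> Q(1)] add_mono) auto
  then have L: "lower_sum \<mu> h\<^sub>1 Q + lower_sum \<mu> h\<^sub>2 Q \<le> lower_sum \<mu> (\<lambda>z. h\<^sub>1 z + h\<^sub>2 z) Q"
    unfolding lower_sum_def by (simp add: distrib_right sum.distrib)
  have "upper_sum \<mu> (\<lambda>z. h\<^sub>1 z + h\<^sub>2 z) Q \<le> (\<Sum>C\<in>Q. (Sup (h\<^sub>1 ` C) + Sup (h\<^sub>2 ` C)) * \<mu> C)"
    using Sup_image_ge[OF h(1)] Sup_image_ge[OF h(2)] fin_partitionD(4)[OF Q(1)]
    by (intro upper_sum_le[OF \<mu> Q(1)] add_mono) auto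
  then have U: "upper_sum \<mu> (\<lambda>z. h\<^sub>1 z + h\<^sub>2 z) Q \<le> upper_sum \<mu> h\<^sub>1 Q + upper_sum \<mu> h\<^sub>2 Q"
    unfolding upper_sum_def by (simp add: distrib_right sum.distrib)
  have h12: "bdd_on_Mtilde (\<lambda>z. h\<^sub>1 z + h\<^sub>2 z)" using bdd_on_Mtilde_add[OF h] .
  show "\<bar>ba_integral \<mu> (\<lambda>z. h\<^sub>1 z + h\<^sub>2 z) - (ba_integral \<mu> h\<^sub>1 + ba_integral \<mu> h\<^sub>2)\<bar> \<le> 2 * e"
    using L U Q(2,3)
      lower_sum_le_ba_integral[OF \<mu> Q(1) h(1)] ba_integral_le_upper_sum[OF \<mu> Q(1) h(1)]
      lower_sum_le_ba_integral[OF \<mu> Q(1) h(2)] ba_integral_le_upper_sum[OF \<mu> Q(1) h(2)]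
      lower_sum_le_ba_integral[OF \<mu> Q(1) h12] ba_integral_le_upper_sum[OF \<mu> Q(1) h12]
    unfolding abs_le_iff by linarith
qed

lemma ba_integral_scale_nonneg:
  assumes \<mu>: "positive_ba \<mu>" and h: "bdd_on_Mtilde h" and "0 \<le> c"
  shows "ba_integral \<mu> (\<lambda>z. c * h z) = c * ba_integral \<mu> h"
proof (rule eq_if_abs_diff_le_eps)
  fix e :: real assume "0 < e"
  then obtain Q where Q: "fin_partition Q" "upper_sum \<mu> h Q - lower_sum \<mu> h Q \<le> e"
    using exists_fine_partition[OF \<mu> h h] by blast
  have "(\<Sum>C\<in>Q. (c * Inf (h ` C)) * \<mu> C) \<le> lower_sum \<mu> (\<lambda>z. c * h z) Q"
    using Inf_image_le[OF h] fin_partitionD(4)[OF Q(1)] \<open>0 \<le> c\<close>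
    by (intro lower_sum_ge[OF \<mu> Q(1)] mult_left_mono) auto
  then have L: "c * lower_sum \<mu> h Q \<le> lower_sum \<mu> (\<lambda>z. c * h z) Q"
    unfolding lower_sum_def by (simp add: sum_distrib_left mult.assoc)
  have "upper_sum \<mu> (\<lambda>z. c * h z) Q \<le> (\<Sum>C\<in>Q. (c * Sup (h ` C)) * \<mu> C)"
    using Sup_image_ge[OF h] fin_partitionD(4)[OF Q(1)] \<open>0 \<le> c\<close>
    by (intro upper_sum_le[OF \<mu> Q(1)] mult_left_mono) auto
  then have U: "upper_sum \<mu> (\<lambda>z. c * h z) Q \<le> c * upper_sum \<mu> h Q"
    unfolding upper_sum_def by (simp add: sum_distrib_left mult.assoc)
  have "c * lower_sum \<mu> h Q \<le> c * ba_integral \<mu> h" "c * ba_integral \<mu> h \<le> c * upper_sum \<mu> h Q"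
    "c * (upper_sum \<mu> h Q - lower_sum \<mu> h Q) \<le> c * e"
    using lower_sum_le_ba_integral[OF \<mu> Q(1) h] ba_integral_le_upper_sum[OF \<mu> Q(1) h] Q(2) \<open>0 \<le> c\<close>
    by (auto intro: mult_left_mono)
  moreover have "lower_sum \<mu> (\<lambda>z. c * h z) Q \<le> ba_integral \<mu> (\<lambda>z. c * h z)"
    "ba_integral \<mu> (\<lambda>z. c * h z) \<le> upper_sum \<mu> (\<lambda>z. c * h z) Q"
    using lower_sum_le_ba_integral[OF \<mu> Q(1)] ba_integral_le_upper_sum[OF \<mu> Q(1)]
      bdd_on_Mtilde_scale[OF h, of c] by auto
  ultimately show "\<bar>ba_integral \<mu> (\<lambda>z. c * h z) - c * ba_integral \<mu> h\<bar> \<le> c * e"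
    using L U unfolding abs_le_iff right_diff_distrib by linarith
qed

lemma ba_integral_scale:
  assumes \<mu>: "positive_ba \<mu>" and h: "bdd_on_Mtilde h"
  shows "ba_integral \<mu> (\<lambda>z. c * h z) = c * ba_integral \<mu> h"
proof (cases "0 \<le> c")
  case False
  have "ba_integral \<mu> (\<lambda>z. c * h z) + ba_integral \<mu> (\<lambda>z. - c * h z) = ba_integral \<mu> (\<lambda>z. 0 * h z)"
    using ba_integral_add[OF \<mu> bdd_on_Mtilde_scale[OF h] bdd_on_Mtilde_scale[OF h], of c "- c"]
    by (simp add: algebra_simps)
  then show ?thesis
    using ba_integral_scale_nonneg[OF \<mu> h, of "- c"] ba_integral_scale_nonneg[OF \<mu> h, of 0] False
    by simp
qed (rule ba_integral_scale_nonneg[OF assms])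

lemma abs_ba_integral_le:
  assumes \<mu>: "positive_ba \<mu>" and h: "\<forall>z\<in>Mtilde. \<bar>h z\<bar> \<le> c"
  shows "\<bar>ba_integral \<mu> h\<bar> \<le> c * \<mu> Mtilde"
proof -
  let ?P = "{Mtilde} - {{}}"
  note P = fin_partition_trivial
  have hb: "bdd_on_Mtilde h" using h unfolding bdd_on_Mtilde_def by blast
  have total: "(\<Sum>C\<in>?P. a * \<mu> C) = a * \<mu> Mtilde" for a
    using positive_ba_partition_total[OF \<mu> P] by (simp add: sum_distrib_left[symmetric])
  have "(- c) * \<mu> Mtilde = (\<Sum>C\<in>?P. (- c) * \<mu> C)" by (rule total[symmetric])
  also have "\<dots> \<le> lower_sum \<mu> h ?P"
    using h fin_partitionD(4)[OF P]
    by (intro lower_sum_ge[OF \<mu> P]) (auto dest!: bspec[OF h] simp: abs_le_iff)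
  also have "\<dots> \<le> ba_integral \<mu> h" by (rule lower_sum_le_ba_integral[OF \<mu> P hb])
  finally have lower: "(- c) * \<mu> Mtilde \<le> ba_integral \<mu> h" .
  have "ba_integral \<mu> h \<le> upper_sum \<mu> h ?P" by (rule ba_integral_le_upper_sum[OF \<mu> P hb])
  also have "\<dots> \<le> (\<Sum>C\<in>?P. c * \<mu> C)"
    using h fin_partitionD(4)[OF P]
    by (intro upper_sum_le[OF \<mu> P]) (auto dest!: bspec[OF h] simp: abs_le_iff)
  also have "\<dots> = c * \<mu> Mtilde" by (rule total)
  finally show ?thesis using lower by (simp add: abs_le_iff)
qed

lemma ba_integral_ge_two_valued:
  assumes \<mu>: "positive_ba \<mu>" and D: "D \<subseteq> Mtilde" and h: "bdd_on_Mtilde h"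
    and ge: "\<And>z. z \<in> D \<Longrightarrow> b\<^sub>1 \<le> h z" "\<And>z. z \<in> Mtilde - D \<Longrightarrow> b\<^sub>2 \<le> h z"
  shows "b\<^sub>1 * \<mu> D + b\<^sub>2 * \<mu> (Mtilde - D) \<le> ba_integral \<mu> h"
proof -
  let ?Q = "level_partition (\<lambda>z. z \<in> D)"
  define a where "a C = (if C \<subseteq> D then b\<^sub>1 else b\<^sub>2)" for C
  have Q: "fin_partition ?Q" by (rule fin_partition_level_partition) simp
  have piece: "C \<subseteq> D \<or> C \<subseteq> Mtilde - D" if "C \<in> ?Q" for C
    using level_partition_eq[OF that] fin_partitionD(4)[OF Q that] by blast
  have "a C * \<mu> C = b\<^sub>1 * \<mu> (C \<inter> D) + b\<^sub>2 * \<mu> (C \<inter> (Mtilde - D))" if "C \<in> ?Q" for C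
  proof -
    have "C \<inter> D = (if C \<subseteq> D then C else {})" "C \<inter> (Mtilde - D) = (if C \<subseteq> D then {} else C)"
      using piece[OF that] fin_partitionD(3)[OF Q that] by auto
    then show ?thesis unfolding a_def by (simp add: positive_ba_empty[OF \<mu>])
  qed
  then have "(\<Sum>C\<in>?Q. a C * \<mu> C) = b\<^sub>1 * \<mu> D + b\<^sub>2 * \<mu> (Mtilde - D)"
    using positive_ba_partition_sum[OF \<mu> Q D] positive_ba_partition_sum[OF \<mu> Q, of "Mtilde - D"]
    by (simp add: sum.distrib sum_distrib_left[symmetric])
  moreover have "(\<Sum>C\<in>?Q. a C * \<mu> C) \<le> lower_sum \<mu> h ?Q"
  proof (rule lower_sum_ge[OF \<mu> Q])
    fix C z assume C: "C \<in> ?Q" and z: "z \<in> C"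
    show "a C \<le> h z"
    proof (cases "C \<subseteq> D")
      case True
      then show ?thesis using ge(1)[of z] z unfolding a_def by auto
    next
      case False
      then have "z \<in> Mtilde - D" using piece[OF C] z by blast
      then show ?thesis using ge(2)[of z] False unfolding a_def by simp
    qed
  qed
  ultimately show ?thesis using lower_sum_le_ba_integral[OF \<mu> Q h] by simp
qed

lemma ba_integral_eqI:
  assumes \<mu>: "positive_ba \<mu>" and h: "bdd_on_Mtilde h"
    and "\<And>P. fin_partition P \<Longrightarrow> lower_sum \<mu> h P \<le> t" "\<And>P. fin_partition P \<Longrightarrow> t \<le> upper_sum \<mu> h P"
  shows "ba_integral \<mu> h = t"
proof (rule antisym)
  show "ba_integral \<mu> h \<le> t"
    unfolding ba_integral_def lower_sum_def[symmetric]
    by (rule cSup_least) (use assms(3) fin_partition_trivial in auto)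
  show "t \<le> ba_integral \<mu> h"
  proof (rule field_le_epsilon)
    fix e :: real assume "0 < e"
    then obtain Q where Q: "fin_partition Q" "upper_sum \<mu> h Q - lower_sum \<mu> h Q \<le> e"
      using exists_fine_partition[OF \<mu> h h] by blast
    then show "t \<le> ba_integral \<mu> h + e"
      using assms(4)[OF Q(1)] lower_sum_le_ba_integral[OF \<mu> Q(1) h] by linarith
  qed
qed

lemma bdd_on_Mtilde_indicator: "bdd_on_Mtilde (indicator A :: 'a \<times> 'a \<Rightarrow> real)"
  unfolding bdd_on_Mtilde_def by (intro exI[of _ 1]) (simp add: indicator_def)

lemma partition_sum_indicator:
  fixes a :: "('a \<times> 'a) set \<Rightarrow> real"
  assumes P: "fin_partition P" and C\<^sub>0: "C\<^sub>0 \<in> P" and z: "z \<in> C\<^sub>0"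
  shows "(\<Sum>C\<in>P. a C * indicator C z) = a C\<^sub>0"
proof -
  have "a C * indicator C z = (if C = C\<^sub>0 then a C else 0)" if C: "C \<in> P" for C
  proof (cases "C = C\<^sub>0")
    case True
    then show ?thesis using z by simp
  next
    case False
    then have "z \<notin> C" using fin_partitionD(5)[OF P C C\<^sub>0] z by blast
    then show ?thesis using False by simp
  qed
  then have "(\<Sum>C\<in>P. a C * indicator C z) = (\<Sum>C\<in>P. if C = C\<^sub>0 then a C else 0)"
    by (rule sum.cong[OF refl])
  also have "\<dots> = a C\<^sub>0" using C\<^sub>0 fin_partitionD(1)[OF P] by simp
  finally show ?thesis .
qed

lemma lower_step_le:
  assumes P: "fin_partition P" and h: "bdd_on_Mtilde h" and z: "z \<in> Mtilde"
  shows "(\<Sum>C\<in>P. Inf (h ` C) * indicator C z) \<le> h z"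
proof -
  obtain C where C: "C \<in> P" "z \<in> C" using fin_partitionD(2)[OF P] z by blast
  then show ?thesis
    using partition_sum_indicator[OF P C, of "\<lambda>C. Inf (h ` C)"]
      Inf_image_le[OF h fin_partitionD(4)[OF P C(1)] C(2)] by simp
qed

lemma upper_step_ge:
  assumes P: "fin_partition P" and h: "bdd_on_Mtilde h" and z: "z \<in> Mtilde"
  shows "h z \<le> (\<Sum>C\<in>P. Sup (h ` C) * indicator C z)"
proof -
  obtain C where C: "C \<in> P" "z \<in> C" using fin_partitionD(2)[OF P] z by blast
  then show ?thesis
    using partition_sum_indicator[OF P C, of "\<lambda>C. Sup (h ` C)"]
      Sup_image_ge[OF h fin_partitionD(4)[OF P C(1)] C(2)] by simp
qed

section \<open>Hahn--Banach extension for spaces of real functions\<close>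

definition fun_subspace :: "('b \<Rightarrow> real) set \<Rightarrow> bool" where
  "fun_subspace V \<longleftrightarrow> (\<forall>h\<in>V. \<forall>k\<in>V. (\<lambda>z. h z + k z) \<in> V) \<and> (\<forall>h\<in>V. \<forall>c. (\<lambda>z. c * h z) \<in> V)"

definition linear_functional_on :: "('b \<Rightarrow> real) set \<Rightarrow> (('b \<Rightarrow> real) \<Rightarrow> real) \<Rightarrow> bool" where
  "linear_functional_on V \<psi> \<longleftrightarrow>
     (\<forall>h\<in>V. \<forall>k\<in>V. \<psi> (\<lambda>z. h z + k z) = \<psi> h + \<psi> k) \<and> (\<forall>h\<in>V. \<forall>c. \<psi> (\<lambda>z. c * h z) = c * \<psi> h)"

definition sublinear_on :: "('b \<Rightarrow> real) set \<Rightarrow> (('b \<Rightarrow> real) \<Rightarrow> real) \<Rightarrow> bool" where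
  "sublinear_on V q \<longleftrightarrow>
     (\<forall>h\<in>V. \<forall>k\<in>V. q (\<lambda>z. h z + k z) \<le> q h + q k) \<and> (\<forall>h\<in>V. \<forall>c>0. q (\<lambda>z. c * h z) = c * q h)"

text \<open>Partial linear functionals are handled through their graphs, so that Zorn's lemma applies
  to set inclusion.\<close>

definition linear_graph :: "(('b \<Rightarrow> real) \<times> real) set \<Rightarrow> bool" where
  "linear_graph G \<longleftrightarrow> ((\<lambda>z. 0), 0) \<in> G \<and>
     (\<forall>h a k b. (h, a) \<in> G \<longrightarrow> (k, b) \<in> G \<longrightarrow> ((\<lambda>z. h z + k z), a + b) \<in> G) \<and>
     (\<forall>h a c. (h, a) \<in> G \<longrightarrow> ((\<lambda>z. c * h z), c * a) \<in> G) \<and>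
     (\<forall>h a b. (h, a) \<in> G \<longrightarrow> (h, b) \<in> G \<longrightarrow> a = b)"

definition dominated_graph :: "(('b \<Rightarrow> real) \<Rightarrow> real) \<Rightarrow> (('b \<Rightarrow> real) \<times> real) set \<Rightarrow> bool" where
  "dominated_graph q G \<longleftrightarrow> (\<forall>h a. (h, a) \<in> G \<longrightarrow> a \<le> q h)"

definition graph_adjoin :: "(('b \<Rightarrow> real) \<times> real) set \<Rightarrow> ('b \<Rightarrow> real) \<Rightarrow> real \<Rightarrow> (('b \<Rightarrow> real) \<times> real) set" where
  "graph_adjoin G x c = {((\<lambda>z. y z + t * x z), a + t * c) | y a t. (y, a) \<in> G}"

lemma fun_subspace_lincomb:
  assumes "fun_subspace V" "h \<in> V" "k \<in> V"
  shows "(\<lambda>z. h z + t * k z) \<in> V"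
proof -
  have add: "\<And>h k. h \<in> V \<Longrightarrow> k \<in> V \<Longrightarrow> (\<lambda>z. h z + k z) \<in> V"
    and scale: "\<And>h. h \<in> V \<Longrightarrow> (\<lambda>z. t * h z) \<in> V"
    using assms(1) unfolding fun_subspace_def by blast+
  show ?thesis by (rule add[OF assms(2) scale[OF assms(3)]])
qed

lemma linear_graphD:
  assumes "linear_graph G"
  shows "((\<lambda>z. 0), 0) \<in> G"
    and "(h, a) \<in> G \<Longrightarrow> (k, b) \<in> G \<Longrightarrow> ((\<lambda>z. h z + k z), a + b) \<in> G"
    and "(h, a) \<in> G \<Longrightarrow> ((\<lambda>z. c * h z), c * a) \<in> G"
    and "(h, a) \<in> G \<Longrightarrow> (h, b) \<in> G \<Longrightarrow> a = b"
  using assms unfolding linear_graph_def by blast+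

lemma subset_graph_adjoin: "G \<subseteq> graph_adjoin G x c"
proof
  fix e assume "e \<in> G"
  moreover obtain y a where "e = (y, a)" by fastforce
  ultimately have "((\<lambda>z. y z + 0 * x z), a + 0 * c) \<in> graph_adjoin G x c"
    unfolding graph_adjoin_def by blast
  then show "e \<in> graph_adjoin G x c" using \<open>e = (y, a)\<close> by simp
qed

lemma in_fst_graph_adjoin: "linear_graph G \<Longrightarrow> x \<in> fst ` graph_adjoin G x c"
proof (rule image_eqI)
  assume "linear_graph G"
  then show "(x, c) \<in> graph_adjoin G x c"
    using linear_graphD(1)[of G] unfolding graph_adjoin_def by force
qed simp

lemma fst_graph_adjoin_subset:
  "fun_subspace V \<Longrightarrow> fst ` G \<subseteq> V \<Longrightarrow> x \<in> V \<Longrightarrow> fst ` graph_adjoin G x c \<subseteq> V"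
  unfolding graph_adjoin_def using fun_subspace_lincomb by force

text \<open>Adjoining a direction \<open>x\<close> outside the domain keeps the graph single-valued: two
  representations \<open>y\<^sub>1 + t\<^sub>1 x = y\<^sub>2 + t\<^sub>2 x\<close> with \<open>t\<^sub>1 \<noteq> t\<^sub>2\<close> would put \<open>x\<close> in the domain.\<close>

lemma graph_adjoin_unique:
  assumes G: "linear_graph G" and x: "x \<notin> fst ` G"
    and ha: "(h, a) \<in> graph_adjoin G x c" and hb: "(h, b) \<in> graph_adjoin G x c"
  shows "a = b"
proof -
  obtain y\<^sub>1 a\<^sub>1 t\<^sub>1 y\<^sub>2 a\<^sub>2 t\<^sub>2 where
    1: "h = (\<lambda>z. y\<^sub>1 z + t\<^sub>1 * x z)" "a = a\<^sub>1 + t\<^sub>1 * c" "(y\<^sub>1, a\<^sub>1) \<in> G" and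
    2: "h = (\<lambda>z. y\<^sub>2 z + t\<^sub>2 * x z)" "b = a\<^sub>2 + t\<^sub>2 * c" "(y\<^sub>2, a\<^sub>2) \<in> G"
    using ha hb unfolding graph_adjoin_def by blast
  have pt: "y\<^sub>1 z - y\<^sub>2 z = (t\<^sub>2 - t\<^sub>1) * x z" for z
    using fun_cong[OF 1(1)[symmetric], of z] 2(1) by (simp add: algebra_simps)
  have "t\<^sub>1 = t\<^sub>2"
  proof (rule ccontr)
    assume "t\<^sub>1 \<noteq> t\<^sub>2"
    have "((\<lambda>z. (1 / (t\<^sub>2 - t\<^sub>1)) * (y\<^sub>1 z + (-1) * y\<^sub>2 z)), (1 / (t\<^sub>2 - t\<^sub>1)) * (a\<^sub>1 + (-1) * a\<^sub>2)) \<in> G"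
      by (intro linear_graphD(2,3)[OF G] 1(3) 2(3))
    moreover have "(\<lambda>z. (1 / (t\<^sub>2 - t\<^sub>1)) * (y\<^sub>1 z + (-1) * y\<^sub>2 z)) = x"
      using pt \<open>t\<^sub>1 \<noteq> t\<^sub>2\<close> by (auto simp: fun_eq_iff field_simps)
    ultimately show False using x by force
  qed
  then have "y\<^sub>1 = y\<^sub>2" using pt by (simp add: fun_eq_iff)
  then show "a = b" using linear_graphD(4)[OF G 1(3)] 2(3) 1(2) 2(2) \<open>t\<^sub>1 = t\<^sub>2\<close> by simp
qed

lemma linear_graph_adjoin:
  assumes G: "linear_graph G" and x: "x \<notin> fst ` G"
  shows "linear_graph (graph_adjoin G x c)"
proof -
  have mem: "((\<lambda>z. y z + t * x z), a + t * c) \<in> graph_adjoin G x c" if "(y, a) \<in> G" for y a t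
    unfolding graph_adjoin_def using that by blast
  have add: "((\<lambda>z. h z + k z), a + b) \<in> graph_adjoin G x c"
    if ha: "(h, a) \<in> graph_adjoin G x c" and kb: "(k, b) \<in> graph_adjoin G x c" for h a k b
  proof -
    obtain y\<^sub>1 a\<^sub>1 t\<^sub>1 y\<^sub>2 a\<^sub>2 t\<^sub>2 where
      1: "h = (\<lambda>z. y\<^sub>1 z + t\<^sub>1 * x z)" "a = a\<^sub>1 + t\<^sub>1 * c" "(y\<^sub>1, a\<^sub>1) \<in> G" and
      2: "k = (\<lambda>z. y\<^sub>2 z + t\<^sub>2 * x z)" "b = a\<^sub>2 + t\<^sub>2 * c" "(y\<^sub>2, a\<^sub>2) \<in> G"
      using ha kb unfolding graph_adjoin_def by blast
    from mem[OF linear_graphD(2)[OF G 1(3) 2(3)], of "t\<^sub>1 + t\<^sub>2"] show ?thesis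
      unfolding 1 2 by (simp add: algebra_simps)
  qed
  have scale: "((\<lambda>z. s * h z), s * a) \<in> graph_adjoin G x c" if ha: "(h, a) \<in> graph_adjoin G x c" for h a s
  proof -
    obtain y a\<^sub>1 t where 1: "h = (\<lambda>z. y z + t * x z)" "a = a\<^sub>1 + t * c" "(y, a\<^sub>1) \<in> G"
      using ha unfolding graph_adjoin_def by blast
    from mem[OF linear_graphD(3)[OF G 1(3), of s], of "s * t"] show ?thesis
      unfolding 1 by (simp add: algebra_simps)
  qed
  have unique: "a = b" if "(h, a) \<in> graph_adjoin G x c" "(h, b) \<in> graph_adjoin G x c" for h a b
    using graph_adjoin_unique[OF G x that] .
  show ?thesis
    unfolding linear_graph_def
    using subset_graph_adjoin linear_graphD(1)[OF G] add scale unique by blast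
qed

lemma dominated_graph_adjoin:
  assumes V: "fun_subspace V" and q: "sublinear_on V q"
    and G: "linear_graph G" "fst ` G \<subseteq> V" "dominated_graph q G" and x: "x \<in> V"
    and c_ge: "\<And>y a. (y, a) \<in> G \<Longrightarrow> a - q (\<lambda>z. y z - x z) \<le> c"
    and c_le: "\<And>w b. (w, b) \<in> G \<Longrightarrow> c \<le> q (\<lambda>z. w z + x z) - b"
  shows "dominated_graph q (graph_adjoin G x c)"
  unfolding dominated_graph_def
proof (intro allI impI)
  fix h a assume "(h, a) \<in> graph_adjoin G x c"
  then obtain y a\<^sub>1 t where h: "h = (\<lambda>z. y z + t * x z)" and a: "a = a\<^sub>1 + t * c" and ya: "(y, a\<^sub>1) \<in> G"
    unfolding graph_adjoin_def by blast
  have hV: "h \<in> V" unfolding h using G(2) ya x by (intro fun_subspace_lincomb[OF V]) force+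
  have q_scale: "q (\<lambda>z. s * h z) = s * q h" if "0 < s" for s
    using q hV that unfolding sublinear_on_def by blast
  consider "t = 0" | "0 < t" | "t < 0" by linarith
  then show "a \<le> q h"
  proof cases
    case 1
    then show ?thesis using G(3) ya unfolding h a dominated_graph_def by simp
  next
    case 2
    have "c \<le> q (\<lambda>z. (1 / t) * y z + x z) - (1 / t) * a\<^sub>1"
      using c_le[OF linear_graphD(3)[OF G(1) ya]] .
    also have "(\<lambda>z. (1 / t) * y z + x z) = (\<lambda>z. (1 / t) * h z)"
      using 2 unfolding h by (simp add: fun_eq_iff field_simps)
    finally have "t * c \<le> q h - a\<^sub>1" using 2 q_scale[of "1 / t"] by (simp add: field_simps)
    then show ?thesis unfolding a by simp
  next
    case 3
    have "(- 1 / t) * a\<^sub>1 - q (\<lambda>z. (- 1 / t) * y z - x z) \<le> c"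
      using c_ge[OF linear_graphD(3)[OF G(1) ya]] .
    moreover have "(\<lambda>z. (- 1 / t) * y z - x z) = (\<lambda>z. (- 1 / t) * h z)"
      using 3 unfolding h by (simp add: fun_eq_iff field_simps)
    ultimately have "a\<^sub>1 - q h \<le> - t * c" using 3 q_scale[of "- 1 / t"] by (simp add: field_simps)
    then show ?thesis unfolding a by simp
  qed
qed

text \<open>The new value \<open>c\<close> is squeezed between \<open>sup (a - q(y - x))\<close> and \<open>inf (q(w + x) - b)\<close>
  over \<open>(y, a), (w, b) \<in> G\<close>; these bounds are compatible because
  \<open>a + b \<le> q(y + w) \<le> q(y - x) + q(w + x)\<close>.\<close>

lemma linear_graph_extend:
  assumes V: "fun_subspace V" and q: "sublinear_on V q"
    and G: "linear_graph G" "fst ` G \<subseteq> V" "dominated_graph q G" and x: "x \<in> V" "x \<notin> fst ` G"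
  obtains G' where "G \<subseteq> G'" "linear_graph G'" "fst ` G' \<subseteq> V" "dominated_graph q G'" "x \<in> fst ` G'"
proof -
  have q_add: "\<And>h k. h \<in> V \<Longrightarrow> k \<in> V \<Longrightarrow> q (\<lambda>z. h z + k z) \<le> q h + q k"
    using q unfolding sublinear_on_def by blast
  have key: "a - q (\<lambda>z. y z - x z) \<le> q (\<lambda>z. w z + x z) - b" if ya: "(y, a) \<in> G" and wb: "(w, b) \<in> G"
    for y a w b
  proof -
    have "y \<in> V" "w \<in> V" using G(2) ya wb by force+
    then have "(\<lambda>z. y z - x z) \<in> V" "(\<lambda>z. w z + x z) \<in> V"
      using fun_subspace_lincomb[OF V _ x(1), of _ "-1"] fun_subspace_lincomb[OF V _ x(1), of _ 1] by auto
    then have "q (\<lambda>z. (y z - x z) + (w z + x z)) \<le> q (\<lambda>z. y z - x z) + q (\<lambda>z. w z + x z)"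
      by (rule q_add)
    moreover have "a + b \<le> q (\<lambda>z. y z + w z)"
      using G(3) linear_graphD(2)[OF G(1) ya wb] unfolding dominated_graph_def by blast
    ultimately show ?thesis by simp
  qed
  define S where "S = {a - q (\<lambda>z. y z - x z) | y a. (y, a) \<in> G}"
  have S: "S \<noteq> {}" unfolding S_def using linear_graphD(1)[OF G(1)] by blast
  have "bdd_above S"
    unfolding S_def using key linear_graphD(1)[OF G(1)] by (intro bdd_aboveI) blast
  then have "a - q (\<lambda>z. y z - x z) \<le> Sup S" if "(y, a) \<in> G" for y a
    using that unfolding S_def by (intro cSup_upper) blast+
  moreover have "Sup S \<le> q (\<lambda>z. w z + x z) - b" if "(w, b) \<in> G" for w b
    using S key that unfolding S_def by (intro cSup_least) blast+
  ultimately have "dominated_graph q (graph_adjoin G x (Sup S))"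
    by (intro dominated_graph_adjoin[OF V q G x(1)])
  then show thesis
    using that[OF subset_graph_adjoin linear_graph_adjoin[OF G(1) x(2)]
        fst_graph_adjoin_subset[OF V G(2) x(1)] _ in_fst_graph_adjoin[OF G(1)]]
    by blast
qed

lemma linear_graph_Union_chain:
  assumes "\<C> \<noteq> {}" "chain\<^sub>\<subseteq> \<C>" "\<And>G. G \<in> \<C> \<Longrightarrow> linear_graph G"
  shows "linear_graph (\<Union>\<C>)"
  unfolding linear_graph_def
proof (intro conjI allI impI)
  have common: "\<exists>G\<in>\<C>. e \<in> G \<and> e' \<in> G" if "e \<in> \<Union>\<C>" "e' \<in> \<Union>\<C>" for e e'
    using that assms(2) unfolding chain_subset_def by blast
  obtain G where "G \<in> \<C>" using assms(1) by blast
  then show "((\<lambda>z. 0), 0) \<in> \<Union>\<C>" using linear_graphD(1)[OF assms(3)] by blast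
  fix h a k b c
  show "((\<lambda>z. c * h z), c * a) \<in> \<Union>\<C>" if ha: "(h, a) \<in> \<Union>\<C>"
  proof -
    obtain G where "G \<in> \<C>" "(h, a) \<in> G" using ha by blast
    then show ?thesis using linear_graphD(3)[OF assms(3)[of G], of h a c] by blast
  qed
  show "((\<lambda>z. h z + k z), a + b) \<in> \<Union>\<C>" if ha: "(h, a) \<in> \<Union>\<C>" and kb: "(k, b) \<in> \<Union>\<C>"
  proof -
    obtain G where "G \<in> \<C>" "(h, a) \<in> G" "(k, b) \<in> G" using common[OF ha kb] by blast
    then show ?thesis using linear_graphD(2)[OF assms(3)[of G], of h a k b] by blast
  qed
  show "a = b" if ha: "(h, a) \<in> \<Union>\<C>" and hb: "(h, b) \<in> \<Union>\<C>"
  proof -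
    obtain G where "G \<in> \<C>" "(h, a) \<in> G" "(h, b) \<in> G" using common[OF ha hb] by blast
    then show ?thesis using linear_graphD(4)[OF assms(3)[of G], of h a b] by blast
  qed
qed

lemma linear_graph_of_functional:
  assumes U: "fun_subspace U" "U \<noteq> {}" and \<phi>: "linear_functional_on U \<phi>"
  shows "linear_graph {(h, \<phi> h) | h. h \<in> U}"
  unfolding linear_graph_def
proof (intro conjI allI impI)
  have U_add: "\<And>h k. h \<in> U \<Longrightarrow> k \<in> U \<Longrightarrow> (\<lambda>z. h z + k z) \<in> U"
    and U_scale: "\<And>h c. h \<in> U \<Longrightarrow> (\<lambda>z. c * h z) \<in> U"
    using U(1) unfolding fun_subspace_def by blast+
  have \<phi>_add: "\<And>h k. h \<in> U \<Longrightarrow> k \<in> U \<Longrightarrow> \<phi> (\<lambda>z. h z + k z) = \<phi> h + \<phi> k"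
    and \<phi>_scale: "\<And>h c. h \<in> U \<Longrightarrow> \<phi> (\<lambda>z. c * h z) = c * \<phi> h"
    using \<phi> unfolding linear_functional_on_def by blast+
  obtain h\<^sub>0 where "h\<^sub>0 \<in> U" using U(2) by blast
  from U_scale[OF this, of 0] \<phi>_scale[OF this, of 0]
  show "((\<lambda>z. 0), 0) \<in> {(h, \<phi> h) | h. h \<in> U}" by auto
  fix h a k b c
  show "((\<lambda>z. h z + k z), a + b) \<in> {(h, \<phi> h) | h. h \<in> U}"
    if "(h, a) \<in> {(h, \<phi> h) | h. h \<in> U}" "(k, b) \<in> {(h, \<phi> h) | h. h \<in> U}"
    using that U_add \<phi>_add by auto
  show "((\<lambda>z. c * h z), c * a) \<in> {(h, \<phi> h) | h. h \<in> U}" if "(h, a) \<in> {(h, \<phi> h) | h. h \<in> U}"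
    using that U_scale \<phi>_scale by auto
  show "a = b" if "(h, a) \<in> {(h, \<phi> h) | h. h \<in> U}" "(h, b) \<in> {(h, \<phi> h) | h. h \<in> U}"
    using that by auto
qed

lemma exists_total_linear_graph:
  assumes V: "fun_subspace V" and q: "sublinear_on V q"
    and G\<^sub>0: "linear_graph G\<^sub>0" "fst ` G\<^sub>0 \<subseteq> V" "dominated_graph q G\<^sub>0"
  obtains M where "G\<^sub>0 \<subseteq> M" "linear_graph M" "fst ` M = V" "dominated_graph q M"
proof -
  define \<A> where "\<A> = {G. G\<^sub>0 \<subseteq> G \<and> linear_graph G \<and> fst ` G \<subseteq> V \<and> dominated_graph q G}"
  have "\<Union>\<C> \<in> \<A>" if \<C>: "\<C> \<in> chains \<A>" "\<C> \<noteq> {}" for \<C>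
  proof -
    have "\<C> \<subseteq> \<A>" "chain\<^sub>\<subseteq> \<C>" using \<C>(1) unfolding chains_def by auto
    then have "linear_graph (\<Union>\<C>)"
      using linear_graph_Union_chain[OF \<C>(2)] unfolding \<A>_def by blast
    moreover have "G\<^sub>0 \<subseteq> \<Union>\<C>" "fst ` \<Union>\<C> \<subseteq> V" "dominated_graph q (\<Union>\<C>)"
      using \<open>\<C> \<subseteq> \<A>\<close> \<C>(2) unfolding \<A>_def dominated_graph_def by blast+
    ultimately show ?thesis unfolding \<A>_def by blast
  qed
  moreover have "G\<^sub>0 \<in> \<A>" unfolding \<A>_def using G\<^sub>0 by blast
  ultimately have "\<forall>\<C>\<in>chains \<A>. \<exists>G\<in>\<A>. \<forall>G'\<in>\<C>. G' \<subseteq> G"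
    by (metis Union_upper empty_iff)
  then obtain M where M: "M \<in> \<A>" and maximal: "\<forall>G\<in>\<A>. M \<subseteq> G \<longrightarrow> G = M"
    using Zorn_Lemma2[of \<A>] by blast
  then have M\<^sub>0: "G\<^sub>0 \<subseteq> M" and M_lin: "linear_graph M" and M_dom: "fst ` M \<subseteq> V" "dominated_graph q M"
    unfolding \<A>_def by auto
  have "h \<in> fst ` M" if "h \<in> V" for h
  proof (rule ccontr)
    assume "h \<notin> fst ` M"
    then obtain G where "M \<subseteq> G" "linear_graph G" "fst ` G \<subseteq> V" "dominated_graph q G" "h \<in> fst ` G"
      using linear_graph_extend[OF V q M_lin M_dom \<open>h \<in> V\<close>] by blast
    moreover from this M\<^sub>0 have "G \<in> \<A>" unfolding \<A>_def by blast
    ultimately show False using maximal \<open>h \<notin> fst ` M\<close> by blast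
  qed
  with M_dom(1) have "fst ` M = V" by blast
  with M\<^sub>0 M_lin M_dom(2) show thesis using that by blast
qed

theorem Hahn_Banach_extension:
  assumes V: "fun_subspace V" and q: "sublinear_on V q"
    and U: "fun_subspace U" "U \<subseteq> V" "U \<noteq> {}"
    and \<phi>: "linear_functional_on U \<phi>" "\<forall>h\<in>U. \<phi> h \<le> q h"
  obtains \<psi> where "linear_functional_on V \<psi>" "\<forall>h\<in>V. \<psi> h \<le> q h" "\<forall>h\<in>U. \<psi> h = \<phi> h"
proof -
  define G\<^sub>0 where "G\<^sub>0 = {(h, \<phi> h) | h. h \<in> U}"
  have "linear_graph G\<^sub>0" unfolding G\<^sub>0_def by (rule linear_graph_of_functional[OF U(1,3) \<phi>(1)])
  moreover have "fst ` G\<^sub>0 \<subseteq> V" "dominated_graph q G\<^sub>0"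
    using U(2) \<phi>(2) unfolding G\<^sub>0_def dominated_graph_def by auto
  ultimately obtain M where M: "G\<^sub>0 \<subseteq> M" "linear_graph M" "fst ` M = V" "dominated_graph q M"
    using exists_total_linear_graph[OF V q] by blast
  define \<psi> where "\<psi> h = (THE a. (h, a) \<in> M)" for h
  have \<psi>_eq: "\<psi> h = a" if "(h, a) \<in> M" for h a
    unfolding \<psi>_def using that linear_graphD(4)[OF M(2), of h] by (intro the_equality)
  have \<psi>_mem: "(h, \<psi> h) \<in> M" if h: "h \<in> V" for h
  proof -
    obtain a where "(h, a) \<in> M" using h M(3) by force
    then show ?thesis using \<psi>_eq by simp
  qed
  show thesis
  proof
    show "linear_functional_on V \<psi>"
      unfolding linear_functional_on_def
    proof (intro conjI ballI allI)
      fix h k c assume "h \<in> V" "k \<in> V"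
      show "\<psi> (\<lambda>z. h z + k z) = \<psi> h + \<psi> k"
        by (rule \<psi>_eq[OF linear_graphD(2)[OF M(2) \<psi>_mem \<psi>_mem]]) fact+
    next
      fix h c assume "h \<in> V"
      show "\<psi> (\<lambda>z. c * h z) = c * \<psi> h"
        by (rule \<psi>_eq[OF linear_graphD(3)[OF M(2) \<psi>_mem]]) fact
    qed
    show "\<forall>h\<in>V. \<psi> h \<le> q h"
      using \<psi>_mem M(4) unfolding dominated_graph_def by blast
    show "\<forall>h\<in>U. \<psi> h = \<phi> h"
      using \<psi>_eq M(1) unfolding G\<^sub>0_def by blast
  qed
qed

lemma linear_functional_on_sum:
  assumes V: "fun_subspace V" "V \<noteq> {}" and \<psi>: "linear_functional_on V \<psi>"
    and "finite P" "\<And>C. C \<in> P \<Longrightarrow> F C \<in> V"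
  shows "(\<lambda>z. \<Sum>C\<in>P. F C z) \<in> V \<and> \<psi> (\<lambda>z. \<Sum>C\<in>P. F C z) = (\<Sum>C\<in>P. \<psi> (F C))"
  using assms(4,5)
proof (induction P rule: finite_induct)
  case empty
  obtain h where "h \<in> V" using V(2) by blast
  then have "(\<lambda>z. 0 * h z) \<in> V \<and> \<psi> (\<lambda>z. 0 * h z) = 0 * \<psi> h"
    using V(1) \<psi> unfolding fun_subspace_def linear_functional_on_def by blast
  then show ?case by simp
next
  case (insert C P)
  then have "F C \<in> V" "(\<lambda>z. \<Sum>C\<in>P. F C z) \<in> V" "\<psi> (\<lambda>z. \<Sum>C\<in>P. F C z) = (\<Sum>C\<in>P. \<psi> (F C))"
    by auto
  then show ?case
    using V(1) \<psi> insert.hyps unfolding fun_subspace_def linear_functional_on_def by simp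
qed

section \<open>Norm-one functionals and optimal measures\<close>

lemma lip_dual_integral_Phi:
  assumes \<mu>: "positive_ba \<mu>" "\<mu> Mtilde = 1"
  shows "lip_dual p (\<lambda>f. ba_integral \<mu> (Phi f))"
  unfolding lip_dual_def
proof (intro conjI ballI allI exI[of _ 1])
  fix f g assume f: "f \<in> Lip0 p" and g: "g \<in> Lip0 p"
  show "ba_integral \<mu> (Phi (\<lambda>x. f x + g x)) = ba_integral \<mu> (Phi f) + ba_integral \<mu> (Phi g)"
    unfolding Phi_add by (rule ba_integral_add[OF \<mu>(1) bdd_on_Mtilde_Phi[OF f] bdd_on_Mtilde_Phi[OF g]])
  fix c
  show "ba_integral \<mu> (Phi (\<lambda>x. c * f x)) = c * ba_integral \<mu> (Phi f)"
    unfolding Phi_scale by (rule ba_integral_scale[OF \<mu>(1) bdd_on_Mtilde_Phi[OF f]])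
  show "\<bar>ba_integral \<mu> (Phi f)\<bar> \<le> 1 * lipnorm f"
    using abs_ba_integral_le[OF \<mu>(1), of "Phi f" "lipnorm f"] abs_Phi_le_lipnorm[OF f] \<mu>(2) by simp
qed

lemma ba_integral_Phi_lower_bound:
  assumes \<mu>: "positive_ba \<mu>" "\<mu> Mtilde = 1" and F: "F \<in> LipBall p"
    and A: "A \<subseteq> Mtilde" "\<And>z. z \<in> A \<Longrightarrow> c \<le> Phi F z"
  shows "(1 + c) * \<mu> A - 1 \<le> ba_integral \<mu> (Phi F)"
proof -
  have "-1 \<le> Phi F z" for z
    using abs_Phi_le_lipnorm[OF LipBall_Lip0[OF F], of z] F unfolding LipBall_def by (simp add: abs_le_iff)
  then have "c * \<mu> A + (-1) * \<mu> (Mtilde - A) \<le> ba_integral \<mu> (Phi F)"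
    using A by (intro ba_integral_ge_two_valued[OF \<mu>(1) A(1) bdd_on_Mtilde_Phi[OF LipBall_Lip0[OF F]]])
  moreover have "\<mu> (Mtilde - A) = 1 - \<mu> A" using positive_ba_diff[OF \<mu>(1) A(1)] \<mu>(2) by simp
  ultimately show ?thesis by (simp add: algebra_simps)
qed

text \<open>Markov's inequality for the nonnegative function \<open>1 - \<Phi> h\<close>.\<close>

lemma measure_small_molecules_le:
  assumes \<mu>: "positive_ba \<mu>" "\<mu> Mtilde = 1" and h: "h \<in> LipBall p"
  shows "(1 - \<gamma>) * \<mu> {z \<in> Mtilde. Phi h z < \<gamma>} \<le> 1 - ba_integral \<mu> (Phi h)"
proof -
  have "(1 + - \<gamma>) * \<mu> {z \<in> Mtilde. Phi h z < \<gamma>} - 1 \<le> ba_integral \<mu> (Phi (\<lambda>x. -1 * h x))"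
    using uminus_in_LipBall[OF h]
    by (intro ba_integral_Phi_lower_bound[OF \<mu>]) (auto simp: Phi_scale[of "-1" h, simplified])
  also have "\<dots> = - ba_integral \<mu> (Phi h)"
    unfolding Phi_scale
    using ba_integral_scale[OF \<mu>(1) bdd_on_Mtilde_Phi[OF LipBall_Lip0[OF h]], of "-1"] by simp
  finally show ?thesis by simp
qed

lemma fun_subspace_bdd_on_Mtilde: "fun_subspace {h. bdd_on_Mtilde h}"
  unfolding fun_subspace_def using bdd_on_Mtilde_add bdd_on_Mtilde_scale by blast

lemma sublinear_on_Sup:
  assumes "(Mtilde :: ('a \<times> 'a) set) \<noteq> {}"
  shows "sublinear_on {h :: 'a \<times> 'a \<Rightarrow> real. bdd_on_Mtilde h} (\<lambda>h. Sup (h ` Mtilde))"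
  unfolding sublinear_on_def
proof (intro conjI ballI allI impI)
  fix h k :: "'a \<times> 'a \<Rightarrow> real" and c :: real
  assume "h \<in> {h. bdd_on_Mtilde h}"
  then have h: "bdd_on_Mtilde h" by simp
  have Sup_ge: "h z \<le> Sup (h ` Mtilde)" if "z \<in> Mtilde" for z
    by (rule Sup_image_ge[OF h order_refl that])
  show "Sup ((\<lambda>z. h z + k z) ` Mtilde) \<le> Sup (h ` Mtilde) + Sup (k ` Mtilde)"
    if "k \<in> {h. bdd_on_Mtilde h}"
  proof (rule cSUP_least[OF assms])
    fix z :: "'a \<times> 'a" assume z: "z \<in> Mtilde"
    have "k z \<le> Sup (k ` Mtilde)" by (rule Sup_image_ge) (use that z in auto)
    then show "h z + k z \<le> Sup (h ` Mtilde) + Sup (k ` Mtilde)" using Sup_ge[OF z] by linarith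
  qed
  assume "0 < c"
  have "Sup ((\<lambda>z. c * h z) ` Mtilde) \<le> c * Sup (h ` Mtilde)"
  proof (rule cSUP_least[OF assms])
    fix z :: "'a \<times> 'a" assume "z \<in> Mtilde"
    then show "c * h z \<le> c * Sup (h ` Mtilde)" using Sup_ge \<open>0 < c\<close> by simp
  qed
  moreover have "Sup (h ` Mtilde) \<le> Sup ((\<lambda>z. c * h z) ` Mtilde) / c"
  proof (rule cSUP_least[OF assms])
    fix z :: "'a \<times> 'a" assume "z \<in> Mtilde"
    then have "c * h z \<le> Sup ((\<lambda>z. c * h z) ` Mtilde)"
      by (rule Sup_image_ge[OF bdd_on_Mtilde_scale[OF h] order_refl])
    then show "h z \<le> Sup ((\<lambda>z. c * h z) ` Mtilde) / c"
      using \<open>0 < c\<close> by (simp add: field_simps)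
  qed
  then have "c * Sup (h ` Mtilde) \<le> Sup ((\<lambda>z. c * h z) ` Mtilde)"
    using \<open>0 < c\<close> by (simp add: field_simps)
  ultimately show "Sup ((\<lambda>z. c * h z) ` Mtilde) = c * Sup (h ` Mtilde)"
    by (rule antisym)
qed

lemma fun_subspace_Phi_Lip0: "fun_subspace (Phi ` Lip0 p)"
  unfolding fun_subspace_def
proof (intro conjI ballI allI)
  fix h k c assume "h \<in> Phi ` Lip0 p"
  then obtain f where f: "f \<in> Lip0 p" "h = Phi f" by blast
  show "(\<lambda>z. c * h z) \<in> Phi ` Lip0 p"
    unfolding f(2) Phi_scale[symmetric] by (rule imageI, rule Lip0_scale[OF f(1)])
  assume "k \<in> Phi ` Lip0 p"
  then obtain g where g: "g \<in> Lip0 p" "k = Phi g" by blast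
  show "(\<lambda>z. h z + k z) \<in> Phi ` Lip0 p"
    unfolding f(2) g(2) Phi_add[symmetric] by (rule imageI, rule Lip0_add[OF f(1) g(1)])
qed

locale sup_dominated_functional =
  fixes \<psi> :: "('a \<times> 'a \<Rightarrow> real) \<Rightarrow> real"
  assumes Mtilde_nonempty: "(Mtilde :: ('a \<times> 'a) set) \<noteq> {}"
    and linear: "linear_functional_on {h. bdd_on_Mtilde h} \<psi>"
    and dominated: "\<And>h. bdd_on_Mtilde h \<Longrightarrow> \<psi> h \<le> Sup (h ` Mtilde)"
begin

lemma add: "bdd_on_Mtilde h \<Longrightarrow> bdd_on_Mtilde k \<Longrightarrow> \<psi> (\<lambda>z. h z + k z) = \<psi> h + \<psi> k"
  and scale: "bdd_on_Mtilde h \<Longrightarrow> \<psi> (\<lambda>z. c * h z) = c * \<psi> h"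
  using linear unfolding linear_functional_on_def by simp_all

lemma mono:
  assumes h: "bdd_on_Mtilde h" and k: "bdd_on_Mtilde k" and le: "\<And>z. z \<in> Mtilde \<Longrightarrow> h z \<le> k z"
  shows "\<psi> h \<le> \<psi> k"
proof -
  have k': "bdd_on_Mtilde (\<lambda>z. -1 * k z)" by (rule bdd_on_Mtilde_scale[OF k])
  have "\<psi> h - \<psi> k = \<psi> (\<lambda>z. h z + -1 * k z)" using add[OF h k'] scale[OF k, of "-1"] by simp
  also have "\<dots> \<le> Sup ((\<lambda>z. h z + -1 * k z) ` Mtilde)" by (rule dominated[OF bdd_on_Mtilde_add[OF h k']])
  also have "\<dots> \<le> 0" by (intro cSUP_least[OF Mtilde_nonempty]) (use le in auto)
  finally show ?thesis by simp
qed

lemma indicator_Mtilde_eq_1: "\<psi> (indicator Mtilde) = 1"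
proof -
  have "Sup (indicator Mtilde ` (Mtilde :: ('a \<times> 'a) set)) \<le> (1 :: real)"
    by (intro cSUP_least[OF Mtilde_nonempty]) auto
  then have "\<psi> (indicator Mtilde) \<le> 1"
    using dominated[OF bdd_on_Mtilde_indicator[of Mtilde]] by linarith
  have "Sup ((\<lambda>z. -1 * indicator Mtilde z) ` (Mtilde :: ('a \<times> 'a) set)) \<le> (-1 :: real)"
    by (intro cSUP_least[OF Mtilde_nonempty]) auto
  then have "\<psi> (\<lambda>z. -1 * indicator Mtilde z) \<le> -1"
    using dominated[OF bdd_on_Mtilde_scale[OF bdd_on_Mtilde_indicator[of Mtilde], of "-1"]] by linarith
  with \<open>\<psi> (indicator Mtilde) \<le> 1\<close> show ?thesis using scale[OF bdd_on_Mtilde_indicator[of Mtilde], of "-1"] by simp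
qed

lemma positive_ba_measure: "positive_ba (\<lambda>A. \<psi> (indicator A))"
proof -
  have zero: "\<psi> (\<lambda>z. 0) = 0" using scale[OF bdd_on_Mtilde_indicator[of "{}"], of 0] by simp
  have bdd0: "bdd_on_Mtilde (\<lambda>z::'a \<times> 'a. 0)" unfolding bdd_on_Mtilde_def by (intro exI[of _ 0]) simp
  have nonneg: "0 \<le> \<psi> (indicator A)" for A
  proof -
    have "\<psi> (\<lambda>z. 0) \<le> \<psi> (indicator A)"
      by (rule mono[OF bdd0 bdd_on_Mtilde_indicator]) (simp add: indicator_def)
    then show ?thesis using zero by simp
  qed
  have le1: "\<psi> (indicator A) \<le> 1" if "A \<subseteq> Mtilde" for A
  proof -
    have "\<psi> (indicator A) \<le> \<psi> (indicator Mtilde)"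
      by (rule mono[OF bdd_on_Mtilde_indicator bdd_on_Mtilde_indicator]) (use that in \<open>auto simp: indicator_def\<close>)
    then show ?thesis using indicator_Mtilde_eq_1 by simp
  qed
  have union: "\<psi> (indicator (A \<union> B)) = \<psi> (indicator A) + \<psi> (indicator B)" if "A \<inter> B = {}" for A B
  proof -
    have "indicator (A \<union> B) = (\<lambda>z. indicator A z + indicator B z :: real)"
      using that by (auto simp: indicator_def fun_eq_iff)
    then show ?thesis using add[OF bdd_on_Mtilde_indicator bdd_on_Mtilde_indicator] by simp
  qed
  show ?thesis
    unfolding positive_ba_def is_ba_def ba_positive_def
  proof (intro conjI allI impI exI[of _ 1])
    fix A B :: "('a \<times> 'a) set"
    assume "A \<subseteq> Mtilde \<and> B \<subseteq> Mtilde \<and> A \<inter> B = {}"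
    then show "\<psi> (indicator (A \<union> B)) = \<psi> (indicator A) + \<psi> (indicator B)" by (intro union) blast
  next
    fix A :: "('a \<times> 'a) set" assume "A \<subseteq> Mtilde"
    then show "\<bar>\<psi> (indicator A)\<bar> \<le> 1" using nonneg[of A] le1[of A] by simp
  qed (rule nonneg)
qed

lemma step_function:
  fixes a :: "('a \<times> 'a) set \<Rightarrow> real"
  assumes P: "fin_partition P"
  shows "bdd_on_Mtilde (\<lambda>z. \<Sum>C\<in>P. a C * indicator C z)"
    and "\<psi> (\<lambda>z. \<Sum>C\<in>P. a C * indicator C z) = (\<Sum>C\<in>P. a C * \<psi> (indicator C))"
proof -
  have "indicator {} \<in> {h :: 'a \<times> 'a \<Rightarrow> real. bdd_on_Mtilde h}"
    by (rule CollectI, rule bdd_on_Mtilde_indicator)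
  then have V: "fun_subspace {h :: 'a \<times> 'a \<Rightarrow> real. bdd_on_Mtilde h}"
      "{h :: 'a \<times> 'a \<Rightarrow> real. bdd_on_Mtilde h} \<noteq> {}"
    using fun_subspace_bdd_on_Mtilde by blast+
  have "(\<lambda>z. \<Sum>C\<in>P. a C * indicator C z) \<in> {h. bdd_on_Mtilde h} \<and>
      \<psi> (\<lambda>z. \<Sum>C\<in>P. a C * indicator C z) = (\<Sum>C\<in>P. \<psi> (\<lambda>z. a C * indicator C z))"
    by (rule linear_functional_on_sum[OF V linear fin_partitionD(1)[OF P]])
      (simp add: bdd_on_Mtilde_scale[OF bdd_on_Mtilde_indicator])
  then show "bdd_on_Mtilde (\<lambda>z. \<Sum>C\<in>P. a C * indicator C z)"
    "\<psi> (\<lambda>z. \<Sum>C\<in>P. a C * indicator C z) = (\<Sum>C\<in>P. a C * \<psi> (indicator C))"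
    using scale[OF bdd_on_Mtilde_indicator] by simp_all
qed

lemma ba_integral_measure:
  assumes h: "bdd_on_Mtilde h"
  shows "ba_integral (\<lambda>A. \<psi> (indicator A)) h = \<psi> h"
proof (rule ba_integral_eqI[OF positive_ba_measure h])
  fix P :: "('a \<times> 'a) set set" assume P: "fin_partition P"
  have "lower_sum (\<lambda>A. \<psi> (indicator A)) h P = \<psi> (\<lambda>z. \<Sum>C\<in>P. Inf (h ` C) * indicator C z)"
    unfolding lower_sum_def using step_function(2)[OF P, of "\<lambda>C. Inf (h ` C)"] by simp
  also have "\<dots> \<le> \<psi> h"
    by (rule mono[OF step_function(1)[OF P] h lower_step_le[OF P h]])
  finally show "lower_sum (\<lambda>A. \<psi> (indicator A)) h P \<le> \<psi> h" .
  have "\<psi> h \<le> \<psi> (\<lambda>z. \<Sum>C\<in>P. Sup (h ` C) * indicator C z)"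
    by (rule mono[OF h step_function(1)[OF P] upper_step_ge[OF P h]])
  also have "\<dots> = upper_sum (\<lambda>A. \<psi> (indicator A)) h P"
    unfolding upper_sum_def using step_function(2)[OF P, of "\<lambda>C. Sup (h ` C)"] by simp
  finally show "\<psi> h \<le> upper_sum (\<lambda>A. \<psi> (indicator A)) h P" .
qed

end

lemma linear_functional_on_Phi_image:
  assumes "lip_dual p \<phi>"
  shows "linear_functional_on (Phi ` Lip0 p) (\<lambda>h. \<phi> (inv_into (Lip0 p) Phi h))"
  unfolding linear_functional_on_def
proof (intro conjI ballI allI)
  have inv: "inv_into (Lip0 p) Phi (Phi f) = f" if "f \<in> Lip0 p" for f
    by (rule inv_into_f_f[OF inj_on_Phi_Lip0 that])
  fix h k c assume "h \<in> Phi ` Lip0 p"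
  then obtain f where f: "f \<in> Lip0 p" "h = Phi f" by blast
  show "\<phi> (inv_into (Lip0 p) Phi (\<lambda>z. c * h z)) = c * \<phi> (inv_into (Lip0 p) Phi h)"
    using assms f unfolding f(2) Phi_scale[symmetric] lip_dual_def by (simp add: inv Lip0_scale)
  assume "k \<in> Phi ` Lip0 p"
  then obtain g where g: "g \<in> Lip0 p" "k = Phi g" by blast
  show "\<phi> (inv_into (Lip0 p) Phi (\<lambda>z. h z + k z)) =
      \<phi> (inv_into (Lip0 p) Phi h) + \<phi> (inv_into (Lip0 p) Phi k)"
    using assms f g unfolding f(2) g(2) Phi_add[symmetric] lip_dual_def by (simp add: inv Lip0_add)
qed

lemma exists_representing_measure:
  fixes \<phi> :: "('a::metric_space \<Rightarrow> real) \<Rightarrow> real"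
  assumes \<phi>: "lip_dual p \<phi>" "dual_norm p \<phi> = 1"
  obtains \<mu> where "positive_ba \<mu>" "\<mu> Mtilde = 1" "\<And>f. f \<in> Lip0 p \<Longrightarrow> ba_integral \<mu> (Phi f) = \<phi> f"
proof -
  obtain x\<^sub>0 y\<^sub>0 :: 'a where "x\<^sub>0 \<noteq> y\<^sub>0" using exists_two_points_if_dual_norm_1[OF \<phi>] .
  then have "(x\<^sub>0, y\<^sub>0) \<in> Mtilde" by simp
  then have M: "(Mtilde :: ('a \<times> 'a) set) \<noteq> {}" by blast
  define \<phi>' where "\<phi>' h = \<phi> (inv_into (Lip0 p) Phi h)" for h
  have \<phi>'_Phi: "\<phi>' (Phi f) = \<phi> f" if "f \<in> Lip0 p" for f
    unfolding \<phi>'_def using inv_into_f_f[OF inj_on_Phi_Lip0 that] by simp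
  have "linear_functional_on (Phi ` Lip0 p) \<phi>'"
    unfolding \<phi>'_def by (rule linear_functional_on_Phi_image[OF \<phi>(1)])
  moreover have "\<phi>' h \<le> Sup (h ` Mtilde)" if "h \<in> Phi ` Lip0 p" for h
  proof -
    obtain f where f: "f \<in> Lip0 p" "h = Phi f" using \<open>h \<in> Phi ` Lip0 p\<close> by blast
    have "\<phi> f \<le> lipnorm f" using abs_le_lipnorm_if_dual_norm_1[OF \<phi> f(1)] by simp
    also have "\<dots> \<le> Sup (Phi f ` Mtilde)" by (rule lipnorm_le_Sup_Phi[OF f(1) \<open>x\<^sub>0 \<noteq> y\<^sub>0\<close>])
    finally show ?thesis using f \<phi>'_Phi by simp
  qed
  moreover have "Phi ` Lip0 p \<subseteq> {h. bdd_on_Mtilde h}" using bdd_on_Mtilde_Phi by blast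
  moreover have "Phi ` Lip0 p \<noteq> {}" using LipBall_Lip0[OF zero_in_LipBall] by blast
  ultimately obtain \<psi> where \<psi>: "linear_functional_on {h. bdd_on_Mtilde h} \<psi>"
      "\<forall>h\<in>{h. bdd_on_Mtilde h}. \<psi> h \<le> Sup (h ` Mtilde)" "\<forall>h\<in>Phi ` Lip0 p. \<psi> h = \<phi>' h"
    using Hahn_Banach_extension[OF fun_subspace_bdd_on_Mtilde sublinear_on_Sup[OF M]
        fun_subspace_Phi_Lip0] by blast
  then interpret sup_dominated_functional \<psi> using M by unfold_locales auto
  show thesis
  proof (rule that[OF positive_ba_measure indicator_Mtilde_eq_1])
    fix f assume "f \<in> Lip0 p"
    then show "ba_integral (\<lambda>A. \<psi> (indicator A)) (Phi f) = \<phi> f"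
      using ba_integral_measure[OF bdd_on_Mtilde_Phi] \<psi>(3) \<phi>'_Phi by simp
  qed
qed

lemma optimal_if_represents:
  assumes \<mu>: "positive_ba \<mu>" "\<mu> Mtilde = 1"
    and rep: "\<And>f. f \<in> Lip0 p \<Longrightarrow> ba_integral \<mu> (Phi f) = \<phi> f" and "dual_norm p \<phi> = 1"
  shows "optimal p \<mu>" and "ba_norm \<mu> = 1"
proof -
  have "{\<bar>ba_integral \<mu> (Phi f)\<bar> | f. f \<in> LipBall p} = {\<bar>\<phi> f\<bar> | f. f \<in> LipBall p}"
    using rep LipBall_Lip0 by (intro set_eqI iffI) force+
  then show "optimal p \<mu>" "ba_norm \<mu> = 1"
    using assms ba_norm_positive_ba[OF \<mu>(1)]
    unfolding optimal_def Phi_star_norm_def dual_norm_def positive_ba_def by simp_all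
qed

section \<open>Extension with a prescribed gap\<close>

lemma abs_diff_min_le:
  fixes F G :: "'a::metric_space \<Rightarrow> real"
  assumes "\<And>x y. \<bar>F x - F y\<bar> \<le> dist x y" "\<And>x y. \<bar>G x - G y\<bar> \<le> dist x y"
  shows "\<bar>min (F x) (G x) - min (F y) (G y)\<bar> \<le> dist x y"
  using assms(1)[of x y] assms(2)[of x y] by (auto simp: min_def abs_le_iff)

lemma abs_diff_max_le:
  fixes F G :: "'a::metric_space \<Rightarrow> real"
  assumes "\<And>x y. \<bar>F x - F y\<bar> \<le> dist x y" "\<And>x y. \<bar>G x - G y\<bar> \<le> dist x y"
  shows "\<bar>max (F x) (G x) - max (F y) (G y)\<bar> \<le> dist x y"
  using assms(1)[of x y] assms(2)[of x y] by (auto simp: max_def abs_le_iff)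

lemma abs_diff_add_dist_le: "\<bar>(c + dist x w) - (c + dist y w)\<bar> \<le> dist x y"
  using abs_dist_diff_le[of x w y] by (simp add: dist_commute)

lemma abs_diff_diff_dist_le: "\<bar>(c - dist x w) - (c - dist y w)\<bar> \<le> dist x y"
  using abs_dist_diff_le[of x w y] by (simp add: dist_commute abs_minus_commute)

text \<open>\<open>H\<close> clamps \<open>f\<close> between the cones \<open>max (a - d(\<cdot>,u)) (b - d(\<cdot>,v))\<close> and
  \<open>min (a + d(\<cdot>,u)) (b + d(\<cdot>,v))\<close>, which both take the value \<open>a\<close> at \<open>u\<close> and \<open>b\<close> at \<open>v\<close>.\<close>

lemma one_lipschitz_clamp:
  fixes f :: "'a::metric_space \<Rightarrow> real"
  assumes f: "\<And>x y. \<bar>f x - f y\<bar> \<le> dist x y" and ab: "\<bar>b - a\<bar> \<le> dist u v"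
    and E: "\<forall>x\<in>E. \<bar>f x - a\<bar> \<le> dist x u \<and> \<bar>f x - b\<bar> \<le> dist x v"
  shows "\<exists>H. (\<forall>x y. \<bar>H x - H y\<bar> \<le> dist x y) \<and> (\<forall>x\<in>E. H x = f x) \<and> H u = a \<and> H v = b"
proof -
  define H where
    "H z = max (max (min (min (f z) (a + dist z u)) (b + dist z v)) (a - dist z u)) (b - dist z v)" for z
  have "\<bar>H x - H y\<bar> \<le> dist x y" for x y
    unfolding H_def by (intro abs_diff_max_le abs_diff_min_le f abs_diff_add_dist_le abs_diff_diff_dist_le)
  moreover have "H x = f x" if "x \<in> E" for x
    using bspec[OF E that] unfolding H_def by (simp add: abs_le_iff min_def max_def)
  moreover have "H u = a" "H v = b"
    using ab unfolding H_def by (auto simp: abs_le_iff min_def max_def dist_commute)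
  ultimately show ?thesis by blast
qed

lemma cone_SUP_bounds:
  fixes f :: "'a::metric_space \<Rightarrow> real"
  assumes f: "\<And>x y. \<bar>f x - f y\<bar> \<le> dist x y" and x: "x \<in> E"
  shows "f x - dist x u \<le> (SUP y\<in>E. f y - dist y u)" and "(SUP y\<in>E. f y - dist y u) \<le> f x + dist x u"
proof -
  have le: "f y - dist y u \<le> f x + dist x u" for y
    using f[of y x] dist_triangle[of y x u] by (simp add: abs_le_iff dist_commute)
  have "bdd_above ((\<lambda>y. f y - dist y u) ` E)" by (rule bdd_aboveI2) (rule le)
  then show "f x - dist x u \<le> (SUP y\<in>E. f y - dist y u)" by (rule cSUP_upper[OF x])
  show "(SUP y\<in>E. f y - dist y u) \<le> f x + dist x u"
    using x le by (intro cSUP_least) auto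
qed

lemma exists_gap_values:
  fixes f :: "'a::metric_space \<Rightarrow> real"
  assumes f: "\<And>x y. \<bar>f x - f y\<bar> \<le> dist x y" and E: "E \<noteq> {}"
    and cond: "\<And>x y. x \<in> E \<Longrightarrow> y \<in> E \<Longrightarrow> f x - f y + \<gamma> * dist u v \<le> dist x u + dist y v"
    and "\<gamma> \<le> 1"
  shows "\<exists>a b. a + \<gamma> * dist u v \<le> b \<and> b \<le> a + dist u v \<and>
    (\<forall>x\<in>E. \<bar>f x - a\<bar> \<le> dist x u \<and> \<bar>f x - b\<bar> \<le> dist x v)"
proof -
  define a where "a = (SUP x\<in>E. f x - dist x u)"
  \<comment> \<open>\<open>c = inf (f y + d(y, v))\<close>, written as a supremum so that \<open>cone_SUP_bounds\<close> applies to \<open>-f\<close>\<close>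
  define c where "c = - (SUP y\<in>E. - f y - dist y v)"
  have f': "\<bar>- f x - - f y\<bar> \<le> dist x y" for x y using f[of x y] by simp
  have a: "\<bar>f x - a\<bar> \<le> dist x u" if "x \<in> E" for x
    using cone_SUP_bounds[OF f that, of u] unfolding a_def by (simp add: abs_le_iff)
  have c: "\<bar>f x - c\<bar> \<le> dist x v" if "x \<in> E" for x
    using cone_SUP_bounds[OF f' that, of v] unfolding c_def by (simp add: abs_le_iff)
  have "(SUP y\<in>E. - f y - dist y v) \<le> - a - \<gamma> * dist u v"
  proof (rule cSUP_least[OF E])
    fix y assume y: "y \<in> E"
    have "a \<le> f y + dist y v - \<gamma> * dist u v"
      unfolding a_def by (rule cSUP_least[OF E]) (use cond y in fastforce)
    then show "- f y - dist y v \<le> - a - \<gamma> * dist u v" by simp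
  qed
  then have "a + \<gamma> * dist u v \<le> c" unfolding c_def by simp
  moreover have "\<gamma> * dist u v \<le> dist u v"
    using mult_right_mono[OF \<open>\<gamma> \<le> 1\<close> zero_le_dist[of u v]] by simp
  moreover have "\<bar>f x - min c (a + dist u v)\<bar> \<le> dist x v" if x: "x \<in> E" for x
    using a[OF x] c[OF x] dist_triangle[of x u v] dist_commute[of v u]
    by (cases "c \<le> a + dist u v") (simp_all add: abs_le_iff min_def)
  ultimately show ?thesis using a by (intro exI[of _ a] exI[of _ "min c (a + dist u v)"]) auto
qed

lemma exists_one_lipschitz_extension_with_gap:
  fixes f :: "'a::metric_space \<Rightarrow> real"
  assumes f: "\<And>x y. \<bar>f x - f y\<bar> \<le> dist x y" and E: "E \<noteq> {}"
    and cond: "\<And>x y. x \<in> E \<Longrightarrow> y \<in> E \<Longrightarrow> f x - f y + \<gamma> * dist u v \<le> dist x u + dist y v"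
    and \<gamma>: "0 \<le> \<gamma>" "\<gamma> \<le> 1"
  obtains H where "\<And>x y. \<bar>H x - H y\<bar> \<le> dist x y" "\<And>x. x \<in> E \<Longrightarrow> H x = f x"
    "\<gamma> * dist u v \<le> H v - H u"
proof -
  obtain a b where ab: "a + \<gamma> * dist u v \<le> b" "b \<le> a + dist u v"
    and E_ab: "\<forall>x\<in>E. \<bar>f x - a\<bar> \<le> dist x u \<and> \<bar>f x - b\<bar> \<le> dist x v"
    using exists_gap_values[OF f E cond \<gamma>(2)] by blast
  have "0 \<le> \<gamma> * dist u v" using \<gamma>(1) by simp
  then have "\<bar>b - a\<bar> \<le> dist u v" using ab by (simp add: abs_le_iff)
  then obtain H where H: "\<forall>x y. \<bar>H x - H y\<bar> \<le> dist x y" "\<forall>x\<in>E. H x = f x" "H u = a" "H v = b"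
    using one_lipschitz_clamp[OF f _ E_ab] by blast
  show thesis
  proof (rule that)
    show "\<bar>H x - H y\<bar> \<le> dist x y" for x y using H(1) by blast
    show "H x = f x" if "x \<in> E" for x using H(2) that by blast
    show "\<gamma> * dist u v \<le> H v - H u" using ab(1) H(3,4) by simp
  qed
qed

lemma max_diff_add_le_dist_sum:
  assumes f: "f \<in> LipBall p" and g: "g \<in> LipBall p"
    and "\<gamma> * dist u v \<le> f v - f u" and "\<gamma> * dist u v \<le> g u - g v"
  shows "max (f x - f y) (g y - g x) + \<gamma> * dist u v \<le> dist x u + dist y v"
  using assms LipBall_abs_diff_le[OF f, of x u] LipBall_abs_diff_le[OF f, of v y]
    LipBall_abs_diff_le[OF g, of y v] LipBall_abs_diff_le[OF g, of u x]
  unfolding max_def by (auto simp: abs_le_iff dist_commute)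

section \<open>The two directions\<close>

definition ld2p_witness :: "'a::metric_space \<Rightarrow> (('a \<times> 'a) set \<Rightarrow> real) \<Rightarrow> real \<Rightarrow> bool" where
  "ld2p_witness p \<mu> \<gamma> \<longleftrightarrow>
     (\<exists>A f g u v. A \<subseteq> Mtilde \<and> \<mu> A \<ge> \<gamma> \<and>
        f \<in> LipBall p \<and> g \<in> LipBall p \<and> u \<noteq> v \<and>
        (\<forall>(x, y) \<in> A. molec f x y \<ge> \<gamma> \<and> molec g x y \<ge> \<gamma>) \<and>
        (\<forall>x \<in> proj_pi A. \<forall>y \<in> proj_pi A.
            max (f x - f y) (g y - g x) + \<gamma> * dist u v \<le> dist x u + dist y v))"

lemma LD2P_imp_far_pair_in_slice:
  assumes "LD2P p" and \<phi>: "lip_dual p \<phi>" "dual_norm p \<phi> = 1" and "0 < \<alpha>" and "r < 2"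
  obtains f g where "f \<in> slice p \<phi> \<alpha>" "g \<in> slice p \<phi> \<alpha>" "r < lipnorm (\<lambda>x. f x - g x)"
proof -
  define T where "T = {lipnorm (\<lambda>x. f x - g x) | f g. f \<in> slice p \<phi> \<alpha> \<and> g \<in> slice p \<phi> \<alpha>}"
  have "Sup T = 2" using assms(1) \<phi> \<open>0 < \<alpha>\<close> unfolding LD2P_def T_def by blast
  moreover obtain f\<^sub>0 where "f\<^sub>0 \<in> slice p \<phi> \<alpha>" using slice_nonempty[OF \<phi> \<open>0 < \<alpha>\<close>] .
  then have "T \<noteq> {}" unfolding T_def by blast
  ultimately obtain t where "t \<in> T" "r < t" using less_cSupD[of T r] \<open>r < 2\<close> by auto
  then show thesis using that unfolding T_def by blast
qed

lemma exists_points_far_apart: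
  assumes f: "f \<in> LipBall p" and g: "g \<in> LipBall p" and far: "1 + \<gamma> < lipnorm (\<lambda>x. f x - g x)"
    and "0 \<le> \<gamma>"
  shows "\<exists>u v. u \<noteq> v \<and> \<gamma> * dist u v \<le> f v - f u \<and> \<gamma> * dist u v \<le> g u - g v"
proof -
  obtain x y where "x \<noteq> y" and xy: "(1 + \<gamma>) * dist x y < \<bar>(f x - g x) - (f y - g y)\<bar>"
    using lipnorm_gt_imp_ratio_gt[OF far] \<open>0 \<le> \<gamma>\<close> by auto
  then have "\<exists>u v. u \<noteq> v \<and> (1 + \<gamma>) * dist u v < (f v - f u) - (g v - g u)"
  proof (cases "0 \<le> (f x - g x) - (f y - g y)")
    case True
    with \<open>x \<noteq> y\<close> xy show ?thesis by (intro exI[of _ y] exI[of _ x]) (auto simp: dist_commute)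
  next
    case False
    with \<open>x \<noteq> y\<close> xy show ?thesis by (intro exI[of _ x] exI[of _ y]) auto
  qed
  then obtain u v where uv: "u \<noteq> v" "(1 + \<gamma>) * dist u v < (f v - f u) - (g v - g u)"
    by blast
  moreover have "\<gamma> * dist u v \<le> f v - f u" "\<gamma> * dist u v \<le> g u - g v"
    using uv(2) LipBall_abs_diff_le[OF f, of v u] LipBall_abs_diff_le[OF g, of v u]
    by (auto simp: distrib_right abs_le_iff dist_commute)
  ultimately show ?thesis by blast
qed

lemma measure_large_molecules_ge:
  assumes \<mu>: "positive_ba \<mu>" "\<mu> Mtilde = 1" and f: "f \<in> LipBall p" and g: "g \<in> LipBall p"
    and "\<gamma> < 1" and depth: "1 - (1 - \<gamma>)\<^sup>2 / 2 < ba_integral \<mu> (Phi f)" "1 - (1 - \<gamma>)\<^sup>2 / 2 < ba_integral \<mu> (Phi g)"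
  shows "\<gamma> \<le> \<mu> {z \<in> Mtilde. \<gamma> \<le> Phi f z \<and> \<gamma> \<le> Phi g z}"
proof -
  have small: "\<mu> {z \<in> Mtilde. Phi h z < \<gamma>} < (1 - \<gamma>) / 2"
    if "h \<in> LipBall p" "1 - (1 - \<gamma>)\<^sup>2 / 2 < ba_integral \<mu> (Phi h)" for h
  proof -
    have "(1 - \<gamma>) * \<mu> {z \<in> Mtilde. Phi h z < \<gamma>} < (1 - \<gamma>) * ((1 - \<gamma>) / 2)"
      using measure_small_molecules_le[OF \<mu> that(1), of \<gamma>] that(2) by (simp add: power2_eq_square)
    then show ?thesis using \<open>\<gamma> < 1\<close> by simp
  qed
  let ?A = "{z \<in> Mtilde. \<gamma> \<le> Phi f z \<and> \<gamma> \<le> Phi g z}"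
  have "\<mu> (Mtilde - ?A) \<le> \<mu> ({z \<in> Mtilde. Phi f z < \<gamma>} \<union> {z \<in> Mtilde. Phi g z < \<gamma>})"
    by (intro positive_ba_mono[OF \<mu>(1)]) auto
  also have "\<dots> \<le> \<mu> {z \<in> Mtilde. Phi f z < \<gamma>} + \<mu> {z \<in> Mtilde. Phi g z < \<gamma>}"
    by (intro positive_ba_union_le[OF \<mu>(1)]) auto
  also have "\<dots> < 1 - \<gamma>" using small[OF f depth(1)] small[OF g depth(2)] by simp
  finally show ?thesis using positive_ba_diff[OF \<mu>(1), of ?A Mtilde] \<mu>(2) by auto
qed

lemma LD2P_imp_ld2p_witness:
  assumes ld2p: "LD2P p" and \<mu>: "is_ba \<mu>" "optimal p \<mu>" "ba_norm \<mu> = 1" and \<gamma>: "0 < \<gamma>" "\<gamma> < 1"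
  shows "ld2p_witness p \<mu> \<gamma>"
proof -
  have pos: "positive_ba \<mu>" using \<mu> unfolding positive_ba_def optimal_def by blast
  have total: "\<mu> Mtilde = 1" using ba_norm_positive_ba[OF pos] \<mu>(3) by simp
  define \<phi> where "\<phi> f = ba_integral \<mu> (Phi f)" for f
  have \<phi>: "lip_dual p \<phi>" "dual_norm p \<phi> = 1"
    using lip_dual_integral_Phi[OF pos total] \<mu>(2,3)
    unfolding \<phi>_def optimal_def Phi_star_norm_def dual_norm_def by simp_all
  have "0 < (1 - \<gamma>)\<^sup>2 / 2" "1 + \<gamma> < 2" using \<gamma> by simp_all
  then obtain f g where "f \<in> slice p \<phi> ((1 - \<gamma>)\<^sup>2 / 2)" "g \<in> slice p \<phi> ((1 - \<gamma>)\<^sup>2 / 2)"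
    and far: "1 + \<gamma> < lipnorm (\<lambda>x. f x - g x)"
    using LD2P_imp_far_pair_in_slice[OF ld2p \<phi>] by blast
  then have f: "f \<in> LipBall p" "1 - (1 - \<gamma>)\<^sup>2 / 2 < ba_integral \<mu> (Phi f)"
    and g: "g \<in> LipBall p" "1 - (1 - \<gamma>)\<^sup>2 / 2 < ba_integral \<mu> (Phi g)"
    unfolding slice_def \<phi>_def by auto
  obtain u v where "u \<noteq> v" "\<gamma> * dist u v \<le> f v - f u" "\<gamma> * dist u v \<le> g u - g v"
    using exists_points_far_apart[OF f(1) g(1) far] \<gamma>(1) by auto
  moreover note max_diff_add_le_dist_sum[OF f(1) g(1) this(2,3)]
  moreover have "\<gamma> \<le> \<mu> {z \<in> Mtilde. \<gamma> \<le> Phi f z \<and> \<gamma> \<le> Phi g z}"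
    by (rule measure_large_molecules_ge[OF pos total f(1) g(1) \<gamma>(2) f(2) g(2)])
  ultimately show ?thesis
    unfolding ld2p_witness_def using f(1) g(1)
    by (intro exI[of _ "{z \<in> Mtilde. \<gamma> \<le> Phi f z \<and> \<gamma> \<le> Phi g z}"] exI[of _ f] exI[of _ g]
        exI[of _ u] exI[of _ v]) (auto simp: Phi_Pair)
qed

lemma shift_in_LipBall: "(\<And>x y. \<bar>H x - H y\<bar> \<le> dist x y) \<Longrightarrow> (\<lambda>x. H x - H p) \<in> LipBall p"
  unfolding LipBall_iff by simp

lemma in_slice_if_molecules_ge:
  fixes \<gamma> \<alpha> :: real
  assumes \<mu>: "positive_ba \<mu>" "\<mu> Mtilde = 1" and rep: "\<And>f. f \<in> Lip0 p \<Longrightarrow> ba_integral \<mu> (Phi f) = \<phi> f"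
    and A: "A \<subseteq> Mtilde" "\<gamma> \<le> \<mu> A" and "0 \<le> \<gamma>" and depth: "1 - \<alpha> < (1 + \<gamma>) * \<gamma> - 1"
    and F: "F \<in> LipBall p" and mol: "\<And>z. z \<in> A \<Longrightarrow> \<gamma> \<le> Phi F z"
  shows "F \<in> slice p \<phi> \<alpha>"
proof -
  have "(1 + \<gamma>) * \<gamma> \<le> (1 + \<gamma>) * \<mu> A" using A(2) \<open>0 \<le> \<gamma>\<close> by simp
  moreover have "(1 + \<gamma>) * \<mu> A - 1 \<le> \<phi> F"
    using ba_integral_Phi_lower_bound[OF \<mu> F A(1) mol] rep[OF LipBall_Lip0[OF F]] by simp
  ultimately show ?thesis using F depth unfolding slice_def by simp
qed

lemma lipnorm_diff_ge_if_gap: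
  assumes "H \<in> Lip0 p" "K \<in> Lip0 p" "u \<noteq> v"
    and "\<gamma> * dist u v \<le> H v - H u" "\<gamma> * dist u v \<le> K u - K v"
  shows "2 * \<gamma> \<le> lipnorm (\<lambda>x. H x - K x)"
proof -
  have "2 * \<gamma> * dist v u \<le> \<bar>(H v - K v) - (H u - K u)\<bar>"
    using assms(4,5) by (simp add: dist_commute abs_le_iff)
  then have "2 * \<gamma> \<le> \<bar>(H v - K v) - (H u - K u)\<bar> / dist v u"
    using \<open>u \<noteq> v\<close> by (simp add: pos_le_divide_eq)
  also have "\<dots> \<le> lipnorm (\<lambda>x. H x - K x)"
    using lipnorm_ge_ratio[OF Lip0_diff[OF assms(1,2)], of v u] \<open>u \<noteq> v\<close> by simp
  finally show ?thesis .
qed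

lemma far_pair_in_slice:
  fixes \<gamma> \<alpha> :: real
  assumes \<mu>: "positive_ba \<mu>" "\<mu> Mtilde = 1" and rep: "\<And>f. f \<in> Lip0 p \<Longrightarrow> ba_integral \<mu> (Phi f) = \<phi> f"
    and w: "ld2p_witness p \<mu> \<gamma>" and \<gamma>: "0 < \<gamma>" "\<gamma> \<le> 1" and depth: "1 - \<alpha> < (1 + \<gamma>) * \<gamma> - 1"
  obtains H K where "H \<in> slice p \<phi> \<alpha>" "K \<in> slice p \<phi> \<alpha>" "2 * \<gamma> \<le> lipnorm (\<lambda>x. H x - K x)"
proof -
  obtain A f g u v where A: "A \<subseteq> Mtilde" "\<gamma> \<le> \<mu> A" and f: "f \<in> LipBall p" and g: "g \<in> LipBall p"
    and "u \<noteq> v" and mol: "\<forall>(x, y) \<in> A. molec f x y \<ge> \<gamma> \<and> molec g x y \<ge> \<gamma>"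
    and far: "\<forall>x \<in> proj_pi A. \<forall>y \<in> proj_pi A.
                max (f x - f y) (g y - g x) + \<gamma> * dist u v \<le> dist x u + dist y v"
    using w unfolding ld2p_witness_def by blast
  have "A \<noteq> {}" using A(2) \<gamma>(1) positive_ba_empty[OF \<mu>(1)] by auto
  then have E: "proj_pi A \<noteq> {}" unfolding proj_pi_def by fast
  have in_slice: "(\<lambda>x. F x - F p) \<in> slice p \<phi> \<alpha>"
    if F: "\<And>x y. \<bar>F x - F y\<bar> \<le> dist x y" and F_eq: "\<And>x. x \<in> proj_pi A \<Longrightarrow> F x = F' x"
      and mol_F': "\<forall>(x, y) \<in> A. \<gamma> \<le> molec F' x y" for F F'
  proof (rule in_slice_if_molecules_ge[OF \<mu> rep A _ depth shift_in_LipBall[OF F]])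
    show "0 \<le> \<gamma>" using \<gamma>(1) by simp
    fix z assume "z \<in> A"
    moreover have "x \<in> proj_pi A" "y \<in> proj_pi A" if "(x, y) \<in> A" for x y
      using that unfolding proj_pi_def by blast+
    ultimately show "\<gamma> \<le> Phi (\<lambda>x. F x - F p) z"
      using mol_F' F_eq by (cases z) (auto simp: Phi_def molec_def)
  qed
  have "f x - f y + \<gamma> * dist u v \<le> dist x u + dist y v" if "x \<in> proj_pi A" "y \<in> proj_pi A" for x y
    using far that by fastforce
  then obtain H where H: "\<And>x y. \<bar>H x - H y\<bar> \<le> dist x y" "\<And>x. x \<in> proj_pi A \<Longrightarrow> H x = f x"
      "\<gamma> * dist u v \<le> H v - H u"
    using exists_one_lipschitz_extension_with_gap[OF LipBall_abs_diff_le[OF f] E] \<gamma> by force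
  have "g x - g y + \<gamma> * dist v u \<le> dist x v + dist y u" if "x \<in> proj_pi A" "y \<in> proj_pi A" for x y
    using far that by (fastforce simp: dist_commute)
  then obtain K where K: "\<And>x y. \<bar>K x - K y\<bar> \<le> dist x y" "\<And>x. x \<in> proj_pi A \<Longrightarrow> K x = g x"
      "\<gamma> * dist v u \<le> K u - K v"
    using exists_one_lipschitz_extension_with_gap[OF LipBall_abs_diff_le[OF g] E] \<gamma> by force
  have "2 * \<gamma> \<le> lipnorm (\<lambda>x. (H x - H p) - (K x - K p))"
    using H(3) K(3) \<open>u \<noteq> v\<close>
    by (intro lipnorm_diff_ge_if_gap[where p = p] LipBall_Lip0 shift_in_LipBall H(1) K(1))
      (auto simp: dist_commute)
  with in_slice[OF H(1,2)] in_slice[OF K(1,2)] mol show thesis by (intro that) auto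
qed

lemma cSup_eq_if_approx:
  fixes T :: "real set"
  assumes le: "\<And>t. t \<in> T \<Longrightarrow> t \<le> b" and approx: "\<And>\<epsilon>. 0 < \<epsilon> \<Longrightarrow> \<exists>t\<in>T. b - \<epsilon> < t"
  shows "Sup T = b"
proof (rule cSup_eq_non_empty)
  show "T \<noteq> {}" using approx[of 1] by auto
  show "t \<le> b" if "t \<in> T" for t using le that .
  show "b \<le> y" if "\<And>t. t \<in> T \<Longrightarrow> t \<le> y" for y
  proof (rule field_le_epsilon)
    fix \<epsilon> :: real assume "0 < \<epsilon>"
    then obtain t where "t \<in> T" "b - \<epsilon> < t" using approx by blast
    then show "b \<le> y + \<epsilon>" using that[of t] by linarith
  qed
qed

lemma ld2p_witness_imp_LD2P:
  fixes p :: "'a::metric_space"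
  assumes witness: "\<And>\<mu> \<gamma>. is_ba \<mu> \<Longrightarrow> optimal p \<mu> \<Longrightarrow> ba_norm \<mu> = 1 \<Longrightarrow> 0 < \<gamma> \<Longrightarrow> \<gamma> < 1 \<Longrightarrow>
      ld2p_witness p \<mu> \<gamma>"
  shows "LD2P p"
  unfolding LD2P_def
proof (intro allI impI)
  fix \<phi> :: "('a \<Rightarrow> real) \<Rightarrow> real" and \<alpha> :: real
  assume "lip_dual p \<phi> \<and> dual_norm p \<phi> = 1 \<and> 0 < \<alpha>"
  then have \<phi>: "lip_dual p \<phi>" "dual_norm p \<phi> = 1" and "0 < \<alpha>" by auto
  obtain \<mu> where \<mu>: "positive_ba \<mu>" "\<mu> Mtilde = 1"
    and rep: "\<And>f. f \<in> Lip0 p \<Longrightarrow> ba_integral \<mu> (Phi f) = \<phi> f"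
    using exists_representing_measure[OF \<phi>] by blast
  have opt: "is_ba \<mu>" "optimal p \<mu>" "ba_norm \<mu> = 1"
    using \<mu>(1) optimal_if_represents[OF \<mu> rep \<phi>(2)] unfolding positive_ba_def by auto
  show "Sup {lipnorm (\<lambda>x. f x - g x) | f g. f \<in> slice p \<phi> \<alpha> \<and> g \<in> slice p \<phi> \<alpha>} = 2"
  proof (rule cSup_eq_if_approx)
    show "t \<le> 2" if "t \<in> {lipnorm (\<lambda>x. f x - g x) | f g. f \<in> slice p \<phi> \<alpha> \<and> g \<in> slice p \<phi> \<alpha>}" for t
      using that lipnorm_diff_LipBall_le unfolding slice_def by blast
    fix \<epsilon> :: real assume "0 < \<epsilon>"
    define \<delta> where "\<delta> = min (1 / 2) (min (\<alpha> / 3) (\<epsilon> / 4))"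
      \<comment> \<open>for \<open>\<gamma> = 1 - \<delta>\<close> the depth condition \<open>1 - \<alpha> < (1 + \<gamma>) \<gamma> - 1\<close> reads \<open>3\<delta> - \<delta>\<^sup>2 < \<alpha>\<close>\<close>
    have \<delta>: "0 < \<delta>" "\<delta> \<le> 1 / 2" "\<delta> \<le> \<alpha> / 3" "\<delta> \<le> \<epsilon> / 4"
      unfolding \<delta>_def using \<open>0 < \<alpha>\<close> \<open>0 < \<epsilon>\<close> by auto
    have "(1 + (1 - \<delta>)) * (1 - \<delta>) - 1 = 1 - 3 * \<delta> + \<delta> * \<delta>" by (simp add: algebra_simps)
    moreover have "0 < \<delta> * \<delta>" using \<delta>(1) by simp
    ultimately have depth: "1 - \<alpha> < (1 + (1 - \<delta>)) * (1 - \<delta>) - 1" using \<delta>(3) by linarith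
    obtain H K where "H \<in> slice p \<phi> \<alpha>" "K \<in> slice p \<phi> \<alpha>" "2 * (1 - \<delta>) \<le> lipnorm (\<lambda>x. H x - K x)"
      using far_pair_in_slice[OF \<mu> rep witness[OF opt] _ _ depth] \<delta>(1,2) by auto
    then show "\<exists>t\<in>{lipnorm (\<lambda>x. f x - g x) | f g. f \<in> slice p \<phi> \<alpha> \<and> g \<in> slice p \<phi> \<alpha>}. 2 - \<epsilon> < t"
      using \<delta>(4) \<open>0 < \<epsilon>\<close> by force
  qed
qed

theorem proposition3p4:
  fixes p :: "'a::metric_space"
  shows "LD2P p \<longleftrightarrow>
    (\<forall>(\<mu> :: ('a \<times> 'a) set \<Rightarrow> real) (\<gamma> :: real).
       is_ba \<mu> \<and> optimal p \<mu> \<and> ba_norm \<mu> = 1 \<and> 0 < \<gamma> \<and> \<gamma> < 1 \<longrightarrow>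
       (\<exists>A f g u v. A \<subseteq> Mtilde \<and> \<mu> A \<ge> \<gamma> \<and>
          f \<in> LipBall p \<and> g \<in> LipBall p \<and> u \<noteq> v \<and>
          (\<forall>(x, y) \<in> A. molec f x y \<ge> \<gamma> \<and> molec g x y \<ge> \<gamma>) \<and>
          (\<forall>x \<in> proj_pi A. \<forall>y \<in> proj_pi A.
              max (f x - f y) (g y - g x) + \<gamma> * dist u v \<le> dist x u + dist y v)))"
  unfolding ld2p_witness_def[symmetric]
  using LD2P_imp_ld2p_witness[of p] ld2p_witness_imp_LD2P[of p] by blast

end
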